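(* Let $Q$ be a set of polynomial equality constraints, each of degree at most $k$, in $n$ pairs of twin variables $x_i,\bar x_i$ ($i\in[n]$). If there is an SOS refutation of $Q$ with $s$ many distinct significant monomials, then there is an SOS refutation of $Q$ of degree at most $4\sqrt{2(n+1)\log(s)}+k+4$.
   Context: Variables come in $n$ twin pairs $x_i,\bar x_i$, $i\in[n]$ (intended Boolean, with $\bar x_i=1-x_i$). Given $Q=\{q_1=0,\dots,q_m=0\}$ and a polynomial $p$, an SOS proof of non-negativity of $p$ from $Q$ is a polynomial identity $$p=\sum_{i\in[k']} r_i^2+\sum_{q\in Q} t_q\,q+\sum_{i\in[n]}\big(u_i(x_i^2-x_i)+v_i(x_i+\bar x_i-1)\big)$$ with arbitrary real polynomials $r_i,t_q,u_i,v_i$. An SOS refutation of $Q$ is an SOS proof of non-negativity of $-1$. Its degree is the maximum of $\deg(r_i^2)$, $\deg(t_q q)$, $\deg(u_i(x_i^2-x_i))$, $\deg(v_i(x_i+\bar x_i-1))$. The significant monomials of the proof are the monomials occurring in the polynomials $r_i$ and $t_q$. *)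

theory Defs
  imports Complex_Main "HOL-Library.Poly_Mapping"
begin

text \<open>Variables: (i, True) stands for x_i and (i, False) for the twin variable bar x_i.\<close>

type_synonym var = "nat \<times> bool"
type_synonym monom = "var \<Rightarrow>\<^sub>0 nat"
type_synonym rpoly = "monom \<Rightarrow>\<^sub>0 real"

definition Var :: "var \<Rightarrow> rpoly" where
  "Var v = Poly_Mapping.single (Poly_Mapping.single v 1) 1"

definition monom_deg :: "monom \<Rightarrow> nat" where
  "monom_deg m = (\<Sum>v\<in>Poly_Mapping.keys m. Poly_Mapping.lookup m v)"

definition pdeg :: "rpoly \<Rightarrow> nat" where
  "pdeg p = Max (insert 0 (monom_deg ` Poly_Mapping.keys p))"

definition pvars :: "rpoly \<Rightarrow> var set" where
  "pvars p = (\<Union>m\<in>Poly_Mapping.keys p. Poly_Mapping.keys m)"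

definition twin_vars :: "nat \<Rightarrow> var set" where
  "twin_vars n = {(i, b). i < n}"

definition sos_refutation ::
  "nat \<Rightarrow> rpoly list \<Rightarrow> rpoly list \<Rightarrow> rpoly list \<Rightarrow> (nat \<Rightarrow> rpoly) \<Rightarrow> (nat \<Rightarrow> rpoly) \<Rightarrow> bool" where
  "sos_refutation n Q rs ts us vs \<longleftrightarrow>
     length ts = length Q \<and>
     (\<forall>r\<in>set rs. pvars r \<subseteq> twin_vars n) \<and>
     (\<forall>t\<in>set ts. pvars t \<subseteq> twin_vars n) \<and>
     (\<forall>i<n. pvars (us i) \<subseteq> twin_vars n \<and> pvars (vs i) \<subseteq> twin_vars n) \<and>
     - 1 = (\<Sum>r\<leftarrow>rs. r * r)
           + (\<Sum>j<length Q. ts ! j * Q ! j)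
           + (\<Sum>i<n. us i * (Var (i, True) * Var (i, True) - Var (i, True))
                     + vs i * (Var (i, True) + Var (i, False) - 1))"

definition sos_degree ::
  "nat \<Rightarrow> rpoly list \<Rightarrow> rpoly list \<Rightarrow> rpoly list \<Rightarrow> (nat \<Rightarrow> rpoly) \<Rightarrow> (nat \<Rightarrow> rpoly) \<Rightarrow> nat" where
  "sos_degree n Q rs ts us vs =
     Max ({0} \<union> {pdeg (r * r) | r. r \<in> set rs}
              \<union> {pdeg (ts ! j * Q ! j) | j. j < length Q}
              \<union> {pdeg (us i * (Var (i, True) * Var (i, True) - Var (i, True))) | i. i < n}
              \<union> {pdeg (vs i * (Var (i, True) + Var (i, False) - 1)) | i. i < n})"

definition significant_monomials :: "rpoly list \<Rightarrow> rpoly list \<Rightarrow> monom set" where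
  "significant_monomials rs ts = (\<Union>p\<in>set rs \<union> set ts. Poly_Mapping.keys p)"

end

(*
  Setting a literal to false kills every monomial containing it. Call a significant monomial
  wide if more than d of its variable pairs are still unset. Some unset literal occurs in a
  d/2n fraction of the wide monomials; branching on it, the branch where it is false loses
  that fraction and the other branch fixes one more variable. After T ~ (2n/d) ln s steps of
  the first kind no wide monomial survives, and there the restricted refutation has degree at
  most 2d + k. The two branches of a variable are glued by a sum-of-squares argument on the
  Boolean cube at the cost of one degree, so the whole tree gives degree about 2d + k + 2T,
  and d ~ sqrt(2 (n + 1) ln s) balances the two terms.

  Everything is done with values at Boolean points; since a polynomial of degree D vanishing
  on the cube lies in the ideal of the Boolean axioms with multipliers of degree D, the result
  is turned back into a refutation.
*)
theory Submission
  imports Defs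
begin

abbreviation lookup :: "('a \<Rightarrow>\<^sub>0 'b::zero) \<Rightarrow> 'a \<Rightarrow> 'b" where "lookup \<equiv> Poly_Mapping.lookup"
abbreviation keys :: "('a \<Rightarrow>\<^sub>0 'b::zero) \<Rightarrow> 'a set" where "keys \<equiv> Poly_Mapping.keys"
abbreviation single :: "'a \<Rightarrow> 'b::zero \<Rightarrow> 'a \<Rightarrow>\<^sub>0 'b" where "single \<equiv> Poly_Mapping.single"

lemma poly_mapping_sum_single_keys: "(p::'a \<Rightarrow>\<^sub>0 'b::comm_monoid_add) = (\<Sum>m\<in>keys p. single m (lookup p m))"
proof (rule poly_mapping_eqI)
  fix k
  show "lookup p k = lookup (\<Sum>m\<in>keys p. single m (lookup p m)) k"
    by (cases "k \<in> keys p") (auto simp: lookup_sum lookup_single when_def in_keys_iff)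
qed

lemma keys_add_monom: "keys ((m1::monom) + m2) = keys m1 \<union> keys m2"
  by (auto simp: in_keys_iff lookup_add)

definition monom_eval :: "(var \<Rightarrow> real) \<Rightarrow> monom \<Rightarrow> real" where
  "monom_eval a m = (\<Prod>v\<in>keys m. a v ^ lookup m v)"

definition poly_eval :: "(var \<Rightarrow> real) \<Rightarrow> rpoly \<Rightarrow> real" where
  "poly_eval a p = (\<Sum>m\<in>keys p. lookup p m * monom_eval a m)"

lemma poly_eval_superset:
  "finite S \<Longrightarrow> keys p \<subseteq> S \<Longrightarrow> poly_eval a p = (\<Sum>m\<in>S. lookup p m * monom_eval a m)"
  unfolding poly_eval_def by (rule sum.mono_neutral_left) (auto simp: in_keys_iff)

lemma monom_eval_superset:
  "finite S \<Longrightarrow> keys m \<subseteq> S \<Longrightarrow> monom_eval a m = (\<Prod>v\<in>S. a v ^ lookup m v)"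
  unfolding monom_eval_def by (rule prod.mono_neutral_left) (auto simp: in_keys_iff)

lemma monom_eval_zero [simp]: "monom_eval a 0 = 1"
  by (simp add: monom_eval_def)

lemma monom_eval_add: "monom_eval a (m1 + m2) = monom_eval a m1 * monom_eval a m2"
proof -
  let ?S = "keys m1 \<union> keys m2"
  have "monom_eval a (m1 + m2) = (\<Prod>v\<in>?S. a v ^ lookup (m1 + m2) v)"
    by (rule monom_eval_superset) (auto simp: keys_add_monom)
  also have "\<dots> = (\<Prod>v\<in>?S. a v ^ lookup m1 v) * (\<Prod>v\<in>?S. a v ^ lookup m2 v)"
    by (simp add: lookup_add power_add prod.distrib)
  also have "\<dots> = monom_eval a m1 * monom_eval a m2"
    by (subst (1 2) monom_eval_superset[where S = ?S]) auto
  finally show ?thesis .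
qed

lemma poly_eval_zero [simp]: "poly_eval a 0 = 0"
  by (simp add: poly_eval_def)

lemma poly_eval_single [simp]: "poly_eval a (single m c) = c * monom_eval a m"
  by (simp add: poly_eval_def)

lemma poly_eval_one [simp]: "poly_eval a 1 = 1"
  using poly_eval_single[of a 0 1] by simp

lemma poly_eval_Var [simp]: "poly_eval a (Var v) = a v"
  by (simp add: Var_def monom_eval_def)

lemma poly_eval_add [simp]: "poly_eval a (p + q) = poly_eval a p + poly_eval a q"
proof -
  let ?S = "keys p \<union> keys q \<union> keys (p + q)"
  have "poly_eval a (p + q) = (\<Sum>m\<in>?S. lookup (p + q) m * monom_eval a m)"
    by (rule poly_eval_superset) auto
  also have "\<dots> = (\<Sum>m\<in>?S. lookup p m * monom_eval a m) + (\<Sum>m\<in>?S. lookup q m * monom_eval a m)"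
    by (simp add: lookup_add distrib_right sum.distrib)
  also have "\<dots> = poly_eval a p + poly_eval a q"
    by (subst (1 2) poly_eval_superset[where S = ?S]) auto
  finally show ?thesis .
qed

lemma poly_eval_uminus [simp]: "poly_eval a (- p) = - poly_eval a p"
  using poly_eval_add[of a "- p" p] by simp

lemma poly_eval_diff [simp]: "poly_eval a (p - q) = poly_eval a p - poly_eval a q"
  using poly_eval_add[of a p "- q"] by simp

lemma poly_eval_sum [simp]: "poly_eval a (\<Sum>i\<in>I. f i) = (\<Sum>i\<in>I. poly_eval a (f i))"
  by (induction I rule: infinite_finite_induct) auto

lemma poly_eval_sum_list [simp]: "poly_eval a (\<Sum>x\<leftarrow>xs. f x) = (\<Sum>x\<leftarrow>xs. poly_eval a (f x))"
  by (induction xs) auto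

lemma poly_eval_mult [simp]: "poly_eval a (p * q) = poly_eval a p * poly_eval a q"
proof -
  have "p * q = (\<Sum>m\<in>keys p. single m (lookup p m)) * (\<Sum>m'\<in>keys q. single m' (lookup q m'))"
    by (subst (1) poly_mapping_sum_single_keys[of p], subst (1) poly_mapping_sum_single_keys[of q]) (rule refl)
  also have "\<dots> = (\<Sum>m\<in>keys p. \<Sum>m'\<in>keys q. single (m + m') (lookup p m * lookup q m'))"
    by (simp add: sum_product mult_single)
  finally have "poly_eval a (p * q) =
      (\<Sum>m\<in>keys p. \<Sum>m'\<in>keys q. lookup p m * lookup q m' * monom_eval a (m + m'))"
    by simp
  also have "\<dots> = (\<Sum>m\<in>keys p. lookup p m * monom_eval a m) * (\<Sum>m'\<in>keys q. lookup q m' * monom_eval a m')"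
    by (simp add: sum_product monom_eval_add algebra_simps)
  finally show ?thesis by (simp add: poly_eval_def)
qed

lemma poly_eval_prod [simp]: "poly_eval a (\<Prod>i\<in>I. f i) = (\<Prod>i\<in>I. poly_eval a (f i))"
  by (induction I rule: infinite_finite_induct) auto

lemma poly_eval_cong:
  assumes "pvars p \<subseteq> V" and "\<And>v. v \<in> V \<Longrightarrow> a v = a' v"
  shows "poly_eval a p = poly_eval a' p"
  unfolding poly_eval_def monom_eval_def
  using assms by (intro sum.cong refl arg_cong2[where f = "(*)"] prod.cong) (auto simp: pvars_def)

lemma pdeg_le_iff: "pdeg p \<le> d \<longleftrightarrow> (\<forall>m\<in>keys p. monom_deg m \<le> d)"
  by (auto simp: pdeg_def)

lemma pvars_subset_iff: "pvars p \<subseteq> V \<longleftrightarrow> (\<forall>m\<in>keys p. keys m \<subseteq> V)"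
  by (auto simp: pvars_def)

lemma monom_deg_superset: "finite S \<Longrightarrow> keys m \<subseteq> S \<Longrightarrow> monom_deg m = (\<Sum>v\<in>S. lookup m v)"
  unfolding monom_deg_def by (rule sum.mono_neutral_left) (auto simp: in_keys_iff)

lemma monom_deg_add: "monom_deg (m1 + m2) = monom_deg m1 + monom_deg m2"
proof -
  let ?S = "keys m1 \<union> keys m2"
  have "monom_deg (m1 + m2) = (\<Sum>v\<in>?S. lookup (m1 + m2) v)"
    by (rule monom_deg_superset) (auto simp: keys_add_monom)
  also have "\<dots> = (\<Sum>v\<in>?S. lookup m1 v) + (\<Sum>v\<in>?S. lookup m2 v)"
    by (simp add: lookup_add sum.distrib)
  also have "\<dots> = monom_deg m1 + monom_deg m2"
    by (subst (1 2) monom_deg_superset[where S = ?S]) auto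
  finally show ?thesis .
qed

lemma card_keys_le_monom_deg: "card (keys m) \<le> monom_deg m"
proof -
  have "card (keys m) = (\<Sum>v\<in>keys m. 1)" by simp
  also have "\<dots> \<le> (\<Sum>v\<in>keys m. lookup m v)" by (rule sum_mono) (auto simp: in_keys_iff)
  finally show ?thesis by (simp add: monom_deg_def)
qed

lemma pdeg_zero [simp]: "pdeg 0 = 0"
  by (simp add: pdeg_def)

lemma pdeg_const [simp]: "pdeg (single 0 c) = 0"
  by (simp add: pdeg_def monom_deg_def)

lemma pdeg_one [simp]: "pdeg 1 = 0"
  by (simp add: pdeg_def monom_deg_def)

lemma pdeg_Var [simp]: "pdeg (Var v) = 1"
  by (simp add: pdeg_def Var_def monom_deg_def)

lemma pdeg_uminus [simp]: "pdeg (- p) = pdeg p"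
  by (simp add: pdeg_def)

lemma pdeg_add_le: "pdeg p \<le> d \<Longrightarrow> pdeg q \<le> d \<Longrightarrow> pdeg (p + q) \<le> d"
  using keys_add[of p q] by (auto simp: pdeg_le_iff)

lemma pdeg_diff_le: "pdeg p \<le> d \<Longrightarrow> pdeg q \<le> d \<Longrightarrow> pdeg (p - q) \<le> d"
  using pdeg_add_le[of p d "- q"] by simp

lemma pdeg_mult_le: "pdeg p \<le> d1 \<Longrightarrow> pdeg q \<le> d2 \<Longrightarrow> pdeg (p * q) \<le> d1 + d2"
  using keys_mult[of p q] by (fastforce simp: pdeg_le_iff monom_deg_add intro: add_mono)

lemma pdeg_const_mult_le: "pdeg p \<le> d \<Longrightarrow> pdeg (single 0 c * p) \<le> d"
  using pdeg_mult_le[of "single 0 c" 0 p d] by simp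

lemma pdeg_Var_mult_le: "pdeg p \<le> d \<Longrightarrow> pdeg (Var v * p) \<le> Suc d"
  using pdeg_mult_le[of "Var v" 1 p d] by simp

lemma pdeg_sum_le: "(\<And>i. i \<in> I \<Longrightarrow> pdeg (f i) \<le> d) \<Longrightarrow> pdeg (\<Sum>i\<in>I. f i) \<le> d"
  by (induction I rule: infinite_finite_induct) (auto intro: pdeg_add_le)

lemma pdeg_sum_list_le: "(\<And>x. x \<in> set xs \<Longrightarrow> pdeg (f x) \<le> d) \<Longrightarrow> pdeg (\<Sum>x\<leftarrow>xs. f x) \<le> d"
  by (induction xs) (auto intro: pdeg_add_le)

lemma pdeg_prod_le:
  assumes "finite S" "\<And>v. v \<in> S \<Longrightarrow> pdeg (f v) \<le> g v"
  shows "pdeg (\<Prod>v\<in>S. f v) \<le> (\<Sum>v\<in>S. g v)"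
  using assms
proof (induction S rule: finite_induct)
  case (insert x F)
  then show ?case using pdeg_mult_le[of "f x" "g x" "prod f F" "sum g F"] by simp
qed simp

lemma pdeg_prod_Var_le: "finite S \<Longrightarrow> pdeg (\<Prod>v\<in>S. Var v) \<le> card S"
  using pdeg_prod_le[of S Var "\<lambda>_. 1"] by simp

lemma pvars_zero [simp]: "pvars 0 = {}"
  by (simp add: pvars_def)

lemma pvars_const [simp]: "pvars (single 0 c) = {}"
  by (simp add: pvars_def)

lemma pvars_one [simp]: "pvars 1 = {}"
  by (simp add: pvars_def)

lemma pvars_Var_subset: "v \<in> V \<Longrightarrow> pvars (Var v) \<subseteq> V"
  by (simp add: pvars_def Var_def)

lemma pvars_uminus [simp]: "pvars (- p) = pvars p"
  by (simp add: pvars_def)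

lemma pvars_add_subset: "pvars p \<subseteq> V \<Longrightarrow> pvars q \<subseteq> V \<Longrightarrow> pvars (p + q) \<subseteq> V"
  using keys_add[of p q] by (auto simp: pvars_subset_iff)

lemma pvars_diff_subset: "pvars p \<subseteq> V \<Longrightarrow> pvars q \<subseteq> V \<Longrightarrow> pvars (p - q) \<subseteq> V"
  using pvars_add_subset[of p V "- q"] by simp

lemma pvars_mult_subset: "pvars p \<subseteq> V \<Longrightarrow> pvars q \<subseteq> V \<Longrightarrow> pvars (p * q) \<subseteq> V"
  unfolding pvars_subset_iff using keys_mult[of p q] by (fastforce simp: keys_add_monom)

lemma pvars_sum_subset: "(\<And>i. i \<in> I \<Longrightarrow> pvars (f i) \<subseteq> V) \<Longrightarrow> pvars (\<Sum>i\<in>I. f i) \<subseteq> V"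
  by (induction I rule: infinite_finite_induct) (simp_all add: pvars_add_subset)

lemma pvars_sum_list_subset:
  "(\<And>x. x \<in> set xs \<Longrightarrow> pvars (f x) \<subseteq> V) \<Longrightarrow> pvars (\<Sum>x\<leftarrow>xs. f x) \<subseteq> V"
  by (induction xs) (simp_all add: pvars_add_subset)

lemma pvars_prod_subset: "(\<And>i. i \<in> I \<Longrightarrow> pvars (f i) \<subseteq> V) \<Longrightarrow> pvars (\<Prod>i\<in>I. f i) \<subseteq> V"
  by (induction I rule: infinite_finite_induct) (simp_all add: pvars_mult_subset)

section \<open>Boolean points and the Boolean ideal\<close>

definition bool_point :: "(nat \<Rightarrow> bool) \<Rightarrow> var \<Rightarrow> real" where
  "bool_point b v = (if b (fst v) = snd v then 1 else 0)"

definition twin :: "var \<Rightarrow> var" where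
  "twin v = (fst v, \<not> snd v)"

lemma bool_point_cases: "bool_point b v = 0 \<or> bool_point b v = 1"
  by (simp add: bool_point_def)

lemma bool_point_twin: "bool_point b (twin v) = 1 - bool_point b v"
  by (simp add: bool_point_def twin_def)

lemma twin_in_twin_vars: "v \<in> twin_vars n \<Longrightarrow> twin v \<in> twin_vars n"
  by (auto simp: twin_def twin_vars_def)

lemma finite_twin_vars: "finite (twin_vars n)"
  by (rule finite_subset[of _ "{..<n} \<times> UNIV"]) (auto simp: twin_vars_def)

lemma card_twin_vars: "card (twin_vars n) = 2 * n"
proof -
  have "twin_vars n = {..<n} \<times> (UNIV :: bool set)" by (auto simp: twin_vars_def)
  then show ?thesis by (simp add: card_cartesian_product)
qed

lemma prod_bool_point_cases: "(\<Prod>v\<in>S. bool_point b v) = 0 \<or> (\<Prod>v\<in>S. bool_point b v) = 1"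
proof (induction S rule: infinite_finite_induct)
  case (insert x F)
  then show ?case using bool_point_cases[of b x] by auto
qed auto

lemma monom_eval_bool_point: "monom_eval (bool_point b) m = (\<Prod>v\<in>keys m. bool_point b v)"
  unfolding monom_eval_def
proof (rule prod.cong[OF refl])
  fix v assume "v \<in> keys m"
  then have "lookup m v \<noteq> 0" by (simp add: in_keys_iff)
  then show "bool_point b v ^ lookup m v = bool_point b v"
    using bool_point_cases[of b v] by (auto simp: zero_power)
qed

definition bool_axiom :: "nat \<Rightarrow> rpoly" where
  "bool_axiom i = Var (i, True) * Var (i, True) - Var (i, True)"

definition twin_axiom :: "nat \<Rightarrow> rpoly" where
  "twin_axiom i = Var (i, True) + Var (i, False) - 1"

definition in_bool_ideal :: "nat \<Rightarrow> nat \<Rightarrow> rpoly \<Rightarrow> bool" where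
  "in_bool_ideal N D p \<longleftrightarrow> (\<exists>u w. p = (\<Sum>i<N. u i * bool_axiom i + w i * twin_axiom i) \<and>
     (\<forall>i<N. pdeg (u i * bool_axiom i) \<le> D \<and> pdeg (w i * twin_axiom i) \<le> D \<and>
            pvars (u i) \<subseteq> twin_vars N \<and> pvars (w i) \<subseteq> twin_vars N))"

lemma poly_eval_bool_axiom [simp]: "poly_eval (bool_point b) (bool_axiom i) = 0"
  by (simp add: bool_axiom_def bool_point_def)

lemma poly_eval_twin_axiom [simp]: "poly_eval (bool_point b) (twin_axiom i) = 0"
  by (simp add: twin_axiom_def bool_point_def)

lemma in_bool_idealE:
  assumes "in_bool_ideal N D p"
  obtains u w where "p = (\<Sum>i<N. u i * bool_axiom i + w i * twin_axiom i)"
    and "\<And>i. i < N \<Longrightarrow> pdeg (u i * bool_axiom i) \<le> D \<and> pdeg (w i * twin_axiom i) \<le> D \<and>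
            pvars (u i) \<subseteq> twin_vars N \<and> pvars (w i) \<subseteq> twin_vars N"
  using assms unfolding in_bool_ideal_def by auto

lemma in_bool_idealI:
  assumes "p = (\<Sum>i<N. u i * bool_axiom i + w i * twin_axiom i)"
    and "\<And>i. i < N \<Longrightarrow> pdeg (u i * bool_axiom i) \<le> D \<and> pdeg (w i * twin_axiom i) \<le> D \<and>
            pvars (u i) \<subseteq> twin_vars N \<and> pvars (w i) \<subseteq> twin_vars N"
  shows "in_bool_ideal N D p"
  unfolding in_bool_ideal_def using assms by auto

lemma in_bool_ideal_eval: "in_bool_ideal N D p \<Longrightarrow> poly_eval (bool_point b) p = 0"
  by (auto simp: in_bool_ideal_def)

lemma in_bool_ideal_zero: "in_bool_ideal N D 0"
  by (rule in_bool_idealI[where u = "\<lambda>_. 0" and w = "\<lambda>_. 0"]) auto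

lemma in_bool_ideal_add:
  assumes "in_bool_ideal N D p" "in_bool_ideal N D q"
  shows "in_bool_ideal N D (p + q)"
proof -
  obtain u w where p: "p = (\<Sum>i<N. u i * bool_axiom i + w i * twin_axiom i)"
    "\<And>i. i < N \<Longrightarrow> pdeg (u i * bool_axiom i) \<le> D \<and> pdeg (w i * twin_axiom i) \<le> D \<and>
      pvars (u i) \<subseteq> twin_vars N \<and> pvars (w i) \<subseteq> twin_vars N"
    using assms(1) by (elim in_bool_idealE) blast
  obtain u' w' where q: "q = (\<Sum>i<N. u' i * bool_axiom i + w' i * twin_axiom i)"
    "\<And>i. i < N \<Longrightarrow> pdeg (u' i * bool_axiom i) \<le> D \<and> pdeg (w' i * twin_axiom i) \<le> D \<and>
      pvars (u' i) \<subseteq> twin_vars N \<and> pvars (w' i) \<subseteq> twin_vars N"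
    using assms(2) by (elim in_bool_idealE) blast
  show ?thesis
  proof (rule in_bool_idealI[where u = "\<lambda>i. u i + u' i" and w = "\<lambda>i. w i + w' i"])
    show "p + q = (\<Sum>i<N. (u i + u' i) * bool_axiom i + (w i + w' i) * twin_axiom i)"
      unfolding p(1) q(1) by (simp add: sum.distrib[symmetric] algebra_simps)
  qed (use p(2) q(2) in \<open>simp add: distrib_right pdeg_add_le pvars_add_subset\<close>)
qed

lemma in_bool_ideal_mult:
  assumes "in_bool_ideal N D p" "pdeg r \<le> e" "pvars r \<subseteq> twin_vars N"
  shows "in_bool_ideal N (e + D) (r * p)"
proof -
  obtain u w where p: "p = (\<Sum>i<N. u i * bool_axiom i + w i * twin_axiom i)"
    "\<And>i. i < N \<Longrightarrow> pdeg (u i * bool_axiom i) \<le> D \<and> pdeg (w i * twin_axiom i) \<le> D \<and>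
      pvars (u i) \<subseteq> twin_vars N \<and> pvars (w i) \<subseteq> twin_vars N"
    using assms(1) by (elim in_bool_idealE) blast
  show ?thesis
  proof (rule in_bool_idealI[where u = "\<lambda>i. r * u i" and w = "\<lambda>i. r * w i"])
    show "r * p = (\<Sum>i<N. r * u i * bool_axiom i + r * w i * twin_axiom i)"
      unfolding p(1) by (simp add: sum_distrib_left algebra_simps)
  qed (use p(2) assms(2,3) in \<open>simp add: mult.assoc pdeg_mult_le pvars_mult_subset\<close>)
qed

lemma in_bool_ideal_mono:
  assumes "in_bool_ideal N D p" "D \<le> D'" "N \<le> N'"
  shows "in_bool_ideal N' D' p"
proof -
  obtain u w where p: "p = (\<Sum>i<N. u i * bool_axiom i + w i * twin_axiom i)"
    "\<And>i. i < N \<Longrightarrow> pdeg (u i * bool_axiom i) \<le> D \<and> pdeg (w i * twin_axiom i) \<le> D \<and>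
      pvars (u i) \<subseteq> twin_vars N \<and> pvars (w i) \<subseteq> twin_vars N"
    using assms(1) by (elim in_bool_idealE) blast
  let ?u = "\<lambda>i. if i < N then u i else 0" and ?w = "\<lambda>i. if i < N then w i else 0"
  have "(\<Sum>i<N'. ?u i * bool_axiom i + ?w i * twin_axiom i) = (\<Sum>i<N. ?u i * bool_axiom i + ?w i * twin_axiom i)"
    by (rule sum.mono_neutral_right) (use assms(3) in auto)
  moreover have "twin_vars N \<subseteq> twin_vars N'"
    using assms(3) by (auto simp: twin_vars_def)
  ultimately show ?thesis
    by (intro in_bool_idealI[where u = ?u and w = ?w]) (use p assms(2) in \<open>auto intro: le_trans\<close>)
qed

lemma in_bool_ideal_uminus: "in_bool_ideal N D p \<Longrightarrow> in_bool_ideal N D (- p)"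
  using in_bool_ideal_mult[of N D p "single 0 (- 1)" 0] by (simp add: single_uminus)

lemma in_bool_ideal_diff: "in_bool_ideal N D p \<Longrightarrow> in_bool_ideal N D q \<Longrightarrow> in_bool_ideal N D (p - q)"
  using in_bool_ideal_add[of N D p "- q"] in_bool_ideal_uminus by simp

lemma in_bool_ideal_sum: "(\<And>x. x \<in> I \<Longrightarrow> in_bool_ideal N D (f x)) \<Longrightarrow> in_bool_ideal N D (\<Sum>x\<in>I. f x)"
  by (induction I rule: infinite_finite_induct) (auto intro: in_bool_ideal_add in_bool_ideal_zero)

lemma pvars_Var_twin_vars: "i < N \<Longrightarrow> pvars (Var (i, c)) \<subseteq> twin_vars N"
  by (rule pvars_Var_subset) (simp add: twin_vars_def)

lemma in_bool_ideal_bool_axiom: "i < N \<Longrightarrow> in_bool_ideal N 2 (bool_axiom i)"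
  by (rule in_bool_idealI[where u = "\<lambda>j. if j = i then 1 else 0" and w = "\<lambda>_. 0"])
    (use pdeg_mult_le[of "Var (i, True)" 1 "Var (i, True)" 1] in
     \<open>auto simp: if_distrib[of "\<lambda>x. x * _"] bool_axiom_def cong: if_cong intro!: pdeg_diff_le\<close>)

lemma in_bool_ideal_twin_axiom: "i < N \<Longrightarrow> in_bool_ideal N 1 (twin_axiom i)"
  by (rule in_bool_idealI[where u = "\<lambda>_. 0" and w = "\<lambda>j. if j = i then 1 else 0"])
    (auto simp: if_distrib[of "\<lambda>x. x * _"] twin_axiom_def cong: if_cong
       intro!: pdeg_diff_le pdeg_add_le)

lemma Var_power: "Var v ^ e = single (single v e) 1"
  by (induction e) (simp_all add: Var_def mult_single single_add[symmetric])

lemma pdeg_Var_power [simp]: "pdeg (Var v ^ e) = e"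
  by (simp add: Var_power pdeg_def monom_deg_def)

lemma pvars_Var_power_subset: "v \<in> V \<Longrightarrow> pvars (Var v ^ e) \<subseteq> V"
  by (simp add: Var_power pvars_def)

lemma in_bool_ideal_Var_square:
  assumes "i < N"
  shows "in_bool_ideal N 2 (Var (i, c) * Var (i, c) - Var (i, c))"
proof (cases c)
  case True
  then show ?thesis using in_bool_ideal_bool_axiom[OF assms] by (simp add: bool_axiom_def)
next
  case False
  let ?x = "Var (i, True)" and ?y = "Var (i, False)"
  have "?y * ?y - ?y = (?y - ?x) * twin_axiom i + bool_axiom i"
    by (simp add: bool_axiom_def twin_axiom_def algebra_simps)
  moreover have "in_bool_ideal N (1 + 1) ((?y - ?x) * twin_axiom i)"
    by (rule in_bool_ideal_mult[OF in_bool_ideal_twin_axiom[OF assms]])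
      (simp_all add: pdeg_diff_le pvars_diff_subset pvars_Var_twin_vars assms)
  ultimately show ?thesis
    using False in_bool_ideal_add[OF _ in_bool_ideal_bool_axiom[OF assms]] by (simp add: numeral_2_eq_2)
qed

lemma in_bool_ideal_Var_power:
  assumes "i < N" "1 \<le> e"
  shows "in_bool_ideal N e (Var (i, c) ^ e - Var (i, c))"
  using assms(2)
proof (induction e rule: dec_induct)
  case base
  then show ?case by (simp add: in_bool_ideal_zero)
next
  case (step e)
  let ?x = "Var (i, c)"
  have eq: "?x ^ Suc e - ?x = ?x * (?x ^ e - ?x) + (?x * ?x - ?x)"
    by (simp add: algebra_simps)
  have "in_bool_ideal N (1 + e) (?x * (?x ^ e - ?x))"
    by (rule in_bool_ideal_mult[OF step.IH]) (simp_all add: pvars_Var_twin_vars assms(1))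
  moreover have "in_bool_ideal N (Suc e) (?x * ?x - ?x)"
    by (rule in_bool_ideal_mono[OF in_bool_ideal_Var_square[OF assms(1)]]) (use step.hyps in auto)
  ultimately show ?case unfolding eq by (simp add: in_bool_ideal_add)
qed

lemma in_bool_ideal_Var_mult_twin:
  assumes "i < N"
  shows "in_bool_ideal N 2 (Var (i, True) * Var (i, False))"
proof -
  let ?x = "Var (i, True)"
  have "?x * Var (i, False) = ?x * twin_axiom i - bool_axiom i"
    by (simp add: bool_axiom_def twin_axiom_def algebra_simps)
  moreover have "in_bool_ideal N (1 + 1) (?x * twin_axiom i)"
    by (rule in_bool_ideal_mult[OF in_bool_ideal_twin_axiom[OF assms]]) (simp_all add: pvars_Var_twin_vars assms)
  ultimately show ?thesis
    using in_bool_ideal_diff[OF _ in_bool_ideal_bool_axiom[OF assms]] by (simp add: numeral_2_eq_2)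
qed

definition drop_pair :: "nat \<Rightarrow> monom \<Rightarrow> monom" where
  "drop_pair i m = Poly_Mapping.update (i, True) 0 (Poly_Mapping.update (i, False) 0 m)"

lemma keys_drop_pair: "keys (drop_pair i m) \<subseteq> keys m - {(i, True), (i, False)}"
  by (auto simp: in_keys_iff drop_pair_def lookup_update split: if_splits)

lemma single_split_pair:
  fixes i m c
  defines "e1 \<equiv> lookup m (i, True)" and "e2 \<equiv> lookup m (i, False)"
  shows "single m c = single (drop_pair i m) c * (Var (i, True) ^ e1 * Var (i, False) ^ e2)"
    and "monom_deg m = monom_deg (drop_pair i m) + e1 + e2"
proof -
  have m: "m = drop_pair i m + single (i, True) e1 + single (i, False) e2"
    unfolding e1_def e2_def
    by (rule poly_mapping_eqI) (auto simp: lookup_add drop_pair_def lookup_update lookup_single when_def)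
  show "single m c = single (drop_pair i m) c * (Var (i, True) ^ e1 * Var (i, False) ^ e2)"
    by (subst m) (simp add: Var_power mult_single add.assoc)
  show "monom_deg m = monom_deg (drop_pair i m) + e1 + e2"
    by (subst m) (simp only: monom_deg_add, simp add: monom_deg_def)
qed

lemma in_bool_ideal_pair_power_reduce:
  assumes "i < N"
  shows "\<exists>a b. in_bool_ideal N (e1 + e2) (Var (i, True) ^ e1 * Var (i, False) ^ e2 - (a + Var (i, True) * b)) \<and>
    pdeg a = 0 \<and> pdeg b = 0 \<and> pvars a = {} \<and> pvars b = {} \<and> (e1 + e2 = 0 \<longrightarrow> b = 0)"
proof -
  let ?x = "Var (i, True)" and ?y = "Var (i, False)"
  consider "e1 = 0" "e2 = 0" | "e1 > 0" "e2 = 0" | "e1 = 0" "e2 > 0" | "e1 > 0" "e2 > 0"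
    by auto
  then show ?thesis
  proof cases
    case 1
    then show ?thesis
      by (intro exI[of _ 1] exI[of _ 0]) (simp add: in_bool_ideal_zero)
  next
    case 2
    then show ?thesis
      using in_bool_ideal_Var_power[OF assms, of e1 True]
      by (intro exI[of _ 0] exI[of _ 1]) simp
  next
    case 3
    have eq: "?x ^ e1 * ?y ^ e2 - (1 + ?x * (- 1)) = (?y ^ e2 - ?y) + twin_axiom i"
      using 3 by (simp add: twin_axiom_def algebra_simps)
    have "in_bool_ideal N e2 ((?y ^ e2 - ?y) + twin_axiom i)"
      using 3 by (intro in_bool_ideal_add in_bool_ideal_Var_power assms
          in_bool_ideal_mono[OF in_bool_ideal_twin_axiom[OF assms]]) simp_all
    then have "in_bool_ideal N (e1 + e2) (?x ^ e1 * ?y ^ e2 - (1 + ?x * (- 1)))"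
      unfolding eq using 3 by simp
    then show ?thesis
      using 3 by (intro exI[of _ 1] exI[of _ "- 1"]) simp
  next
    case 4
    let ?R = "?x ^ (e1 - 1) * ?y ^ (e2 - 1)"
    have "pdeg ?R \<le> e1 - 1 + (e2 - 1)"
      by (intro pdeg_mult_le) simp_all
    moreover have "pvars ?R \<subseteq> twin_vars N"
      using assms by (intro pvars_mult_subset pvars_Var_power_subset) (simp_all add: twin_vars_def)
    ultimately have "in_bool_ideal N (e1 - 1 + (e2 - 1) + 2) (?R * (?x * ?y))"
      by (rule in_bool_ideal_mult[OF in_bool_ideal_Var_mult_twin[OF assms]])
    moreover have "e1 - 1 + (e2 - 1) + 2 = e1 + e2"
      using 4 by simp
    moreover have "?R * (?x * ?y) = ?x ^ e1 * ?y ^ e2 - (0 + ?x * 0)"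
      using 4 by (simp add: algebra_simps power_eq_if)
    ultimately show ?thesis
      using 4 by (intro exI[of _ 0] exI[of _ 0]) simp
  qed
qed

lemma in_bool_ideal_monomial_reduce:
  assumes "keys m \<subseteq> twin_vars (Suc N)"
  shows "\<exists>a b. in_bool_ideal (Suc N) (monom_deg m) (single m c - (a + Var (N, True) * b)) \<and>
    pdeg a \<le> monom_deg m \<and> pdeg b \<le> monom_deg m - 1 \<and> (monom_deg m = 0 \<longrightarrow> b = 0) \<and>
    pvars a \<subseteq> twin_vars N \<and> pvars b \<subseteq> twin_vars N"
proof -
  let ?x = "Var (N, True)" and ?y = "Var (N, False)"
  define e1 where "e1 = lookup m (N, True)"
  define e2 where "e2 = lookup m (N, False)"
  define P where "P = single (drop_pair N m) c"
  have m: "single m c = P * (?x ^ e1 * ?y ^ e2)"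
    and deg: "monom_deg m = monom_deg (drop_pair N m) + e1 + e2"
    unfolding P_def e1_def e2_def by (rule single_split_pair)+
  have degP: "pdeg P \<le> monom_deg (drop_pair N m)"
    by (simp add: P_def pdeg_def)
  have varsP: "pvars P \<subseteq> twin_vars N"
    using keys_drop_pair[of N m] assms by (auto simp: P_def pvars_def twin_vars_def less_Suc_eq)
  then have "pvars P \<subseteq> twin_vars (Suc N)"
    by (auto simp: twin_vars_def)
  obtain a0 b0 where ab0: "in_bool_ideal (Suc N) (e1 + e2) (?x ^ e1 * ?y ^ e2 - (a0 + ?x * b0))"
    "pdeg a0 = 0" "pdeg b0 = 0" "pvars a0 = {}" "pvars b0 = {}" "e1 + e2 = 0 \<longrightarrow> b0 = 0"
    using in_bool_ideal_pair_power_reduce[of N "Suc N"] by blast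
  have "in_bool_ideal (Suc N) (monom_deg (drop_pair N m) + (e1 + e2)) (P * (?x ^ e1 * ?y ^ e2 - (a0 + ?x * b0)))"
    by (rule in_bool_ideal_mult[OF ab0(1) degP \<open>pvars P \<subseteq> twin_vars (Suc N)\<close>])
  then have ideal: "in_bool_ideal (Suc N) (monom_deg m) (single m c - (a0 * P + ?x * (b0 * P)))"
    by (simp add: m deg add.assoc algebra_simps)
  have "pdeg (a0 * P) \<le> monom_deg m"
    using pdeg_mult_le[OF _ degP, of a0 0] ab0(2) deg by simp
  moreover have "pdeg (b0 * P) \<le> monom_deg m - 1" "monom_deg m = 0 \<longrightarrow> b0 * P = 0"
    using pdeg_mult_le[OF _ degP, of b0 0] ab0(3,6) deg by auto
  moreover have "pvars (a0 * P) \<subseteq> twin_vars N" "pvars (b0 * P) \<subseteq> twin_vars N"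
    using varsP ab0(4,5) by (simp_all add: pvars_mult_subset)
  ultimately show ?thesis
    using ideal by (intro exI[of _ "a0 * P"] exI[of _ "b0 * P"]) simp
qed

lemma in_bool_ideal_reduce:
  assumes "pvars p \<subseteq> twin_vars (Suc N)" "pdeg p \<le> D"
  shows "\<exists>a b. in_bool_ideal (Suc N) D (p - (a + Var (N, True) * b)) \<and>
    pdeg a \<le> D \<and> pdeg b \<le> D - 1 \<and> (D = 0 \<longrightarrow> b = 0) \<and>
    pvars a \<subseteq> twin_vars N \<and> pvars b \<subseteq> twin_vars N"
proof -
  let ?x = "Var (N, True)"
  have "\<forall>m\<in>keys p. \<exists>a b.
      in_bool_ideal (Suc N) (monom_deg m) (single m (lookup p m) - (a + ?x * b)) \<and>
      pdeg a \<le> monom_deg m \<and> pdeg b \<le> monom_deg m - 1 \<and> (monom_deg m = 0 \<longrightarrow> b = 0) \<and>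
      pvars a \<subseteq> twin_vars N \<and> pvars b \<subseteq> twin_vars N"
    using in_bool_ideal_monomial_reduce assms(1) unfolding pvars_subset_iff by blast
  then obtain A B where AB: "\<And>m. m \<in> keys p \<Longrightarrow>
      in_bool_ideal (Suc N) (monom_deg m) (single m (lookup p m) - (A m + ?x * B m)) \<and>
      pdeg (A m) \<le> monom_deg m \<and> pdeg (B m) \<le> monom_deg m - 1 \<and> (monom_deg m = 0 \<longrightarrow> B m = 0) \<and>
      pvars (A m) \<subseteq> twin_vars N \<and> pvars (B m) \<subseteq> twin_vars N"
    by metis
  have deg: "\<And>m. m \<in> keys p \<Longrightarrow> monom_deg m \<le> D"
    using assms(2) by (simp add: pdeg_le_iff)
  define a where "a = (\<Sum>m\<in>keys p. A m)"
  define b where "b = (\<Sum>m\<in>keys p. B m)"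
  have split: "p - (a + ?x * b) = (\<Sum>m\<in>keys p. single m (lookup p m) - (A m + ?x * B m))"
    by (subst (1) poly_mapping_sum_single_keys[of p])
      (simp add: a_def b_def sum_distrib_left sum.distrib sum_subtractf)
  have "in_bool_ideal (Suc N) D (p - (a + ?x * b))"
    unfolding split by (rule in_bool_ideal_sum) (meson AB deg in_bool_ideal_mono order_refl)
  moreover have "pdeg a \<le> D"
    unfolding a_def by (rule pdeg_sum_le) (meson AB deg le_trans)
  moreover have "pdeg b \<le> D - 1"
    unfolding b_def by (rule pdeg_sum_le) (meson AB deg le_trans diff_le_mono)
  moreover have "pvars a \<subseteq> twin_vars N" "pvars b \<subseteq> twin_vars N"
    unfolding a_def b_def using AB by (simp_all add: pvars_sum_subset)
  moreover have "D = 0 \<longrightarrow> b = 0"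
    unfolding b_def using AB deg by auto
  ultimately show ?thesis by blast
qed

lemma poly_eq_zero_if_vanishing_without_vars:
  assumes "pvars p \<subseteq> {}" "\<And>b. poly_eval (bool_point b) p = 0"
  shows "p = 0"
proof -
  have "keys p \<subseteq> {0}"
    using assms(1) by (auto simp: pvars_def)
  then have "poly_eval (bool_point b) p = lookup p 0" for b
    using poly_eval_superset[of "{0}" p] by simp
  then have "lookup p 0 = 0"
    using assms(2) by simp
  with \<open>keys p \<subseteq> {0}\<close> show ?thesis
    by (intro poly_mapping_eqI) (metis in_keys_iff lookup_zero singletonD subsetD)
qed

lemma vanishing_split_last_pair:
  assumes "pvars a \<subseteq> twin_vars N" "pvars b \<subseteq> twin_vars N"
    and "\<And>\<beta>. poly_eval (bool_point \<beta>) (a + Var (N, True) * b) = 0"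
  shows "poly_eval (bool_point \<beta>) a = 0" "poly_eval (bool_point \<beta>) b = 0"
proof -
  have same: "poly_eval (bool_point (\<beta>(N := c))) q = poly_eval (bool_point \<beta>) q"
    if "pvars q \<subseteq> twin_vars N" for q c
    by (rule poly_eval_cong[OF that]) (auto simp: bool_point_def twin_vars_def)
  show a: "poly_eval (bool_point \<beta>) a = 0"
    using assms(3)[of "\<beta>(N := False)"] same[OF assms(1)] by (simp add: bool_point_def)
  show "poly_eval (bool_point \<beta>) b = 0"
    using assms(3)[of "\<beta>(N := True)"] same[OF assms(1)] same[OF assms(2)] a
    by (simp add: bool_point_def)
qed

theorem in_bool_ideal_complete:
  assumes "pvars p \<subseteq> twin_vars N" "pdeg p \<le> D" "\<And>\<beta>. poly_eval (bool_point \<beta>) p = 0"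
  shows "in_bool_ideal N D p"
  using assms
proof (induction N arbitrary: p D)
  case 0
  then have "p = 0"
    by (intro poly_eq_zero_if_vanishing_without_vars) (simp_all add: twin_vars_def)
  then show ?case by (simp add: in_bool_ideal_zero)
next
  case (Suc N)
  let ?x = "Var (N, True)"
  obtain a b where ab: "in_bool_ideal (Suc N) D (p - (a + ?x * b))"
    "pdeg a \<le> D" "pdeg b \<le> D - 1" "D = 0 \<longrightarrow> b = 0" "pvars a \<subseteq> twin_vars N" "pvars b \<subseteq> twin_vars N"
    using in_bool_ideal_reduce[OF Suc.prems(1,2)] by blast
  have "poly_eval (bool_point \<beta>) (a + ?x * b) = 0" for \<beta>
    using in_bool_ideal_eval[OF ab(1), of \<beta>] Suc.prems(3)[of \<beta>] by simp
  note vanish = vanishing_split_last_pair[OF ab(5,6) this]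
  have "in_bool_ideal (Suc N) D a"
    by (rule in_bool_ideal_mono[OF Suc.IH[OF ab(5,2) vanish(1)]]) simp_all
  moreover have "in_bool_ideal (Suc N) D (?x * b)"
  proof (cases "D = 0")
    case True
    then show ?thesis using ab(4) by (simp add: in_bool_ideal_zero)
  next
    case False
    have "in_bool_ideal (Suc N) (D - 1) b"
      by (rule in_bool_ideal_mono[OF Suc.IH[OF ab(6,3) vanish(2)]]) simp_all
    from in_bool_ideal_mult[OF this _ pvars_Var_twin_vars[of N "Suc N" True], of 1] False show ?thesis
      by simp
  qed
  ultimately have "in_bool_ideal (Suc N) D ((p - (a + ?x * b)) + (a + ?x * b))"
    by (intro in_bool_ideal_add ab(1))
  then show ?case by simp
qed

section \<open>Substitutions\<close>

text \<open>Multilinear substitution: a monomial becomes the product of the images of its variables,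
  exponents being ignored. On Boolean points this agrees with ordinary substitution, and it
  does not increase the degree when every image has degree at most one.\<close>

definition poly_subst :: "(var \<Rightarrow> rpoly) \<Rightarrow> rpoly \<Rightarrow> rpoly" where
  "poly_subst f p = (\<Sum>m\<in>keys p. single 0 (lookup p m) * (\<Prod>v\<in>keys m. f v))"

lemma poly_eval_bool_point: "poly_eval (bool_point b) p = (\<Sum>m\<in>keys p. lookup p m * (\<Prod>v\<in>keys m. bool_point b v))"
  by (simp add: poly_eval_def monom_eval_bool_point)

lemma poly_eval_subst_bool_point:
  assumes "\<And>v. poly_eval (bool_point b) (f v) = bool_point b' v"
  shows "poly_eval (bool_point b) (poly_subst f p) = poly_eval (bool_point b') p"
  by (simp add: poly_subst_def assms) (simp add: poly_eval_bool_point)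

lemma pvars_subst_subset:
  assumes "pvars p \<subseteq> W" "\<And>v. v \<in> W \<Longrightarrow> pvars (f v) \<subseteq> V"
  shows "pvars (poly_subst f p) \<subseteq> V"
  unfolding poly_subst_def
proof (intro pvars_sum_subset pvars_mult_subset pvars_prod_subset)
  fix m v assume "m \<in> keys p" "v \<in> keys m"
  then have "v \<in> W" using assms(1) by (auto simp: pvars_def)
  then show "pvars (f v) \<subseteq> V" by (rule assms(2))
qed simp

lemma pdeg_subst_le:
  "(\<And>m. m \<in> keys p \<Longrightarrow> pdeg (\<Prod>v\<in>keys m. f v) \<le> d) \<Longrightarrow> pdeg (poly_subst f p) \<le> d"
  unfolding poly_subst_def by (intro pdeg_sum_le pdeg_const_mult_le) auto

lemma pdeg_subst_linear_le:
  assumes "\<And>v. pdeg (f v) \<le> 1" "pdeg p \<le> d"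
  shows "pdeg (poly_subst f p) \<le> d"
proof (rule pdeg_subst_le)
  fix m assume "m \<in> keys p"
  then have "card (keys m) \<le> d"
    using card_keys_le_monom_deg[of m] assms(2) by (auto simp: pdeg_le_iff)
  moreover have "pdeg (\<Prod>v\<in>keys m. f v) \<le> card (keys m)"
    using pdeg_prod_le[of "keys m" f "\<lambda>_. 1"] assms(1) by simp
  ultimately show "pdeg (\<Prod>v\<in>keys m. f v) \<le> d" by simp
qed

text \<open>Every monomial on which the two substitutions differ contains a variable of the pair \<open>i\<close>,
  which both map to a constant.\<close>

lemma pdeg_subst_diff_le:
  assumes "\<And>v. fst v \<noteq> i \<Longrightarrow> f1 v = f0 v"
    and "\<And>v. pdeg (f0 v) \<le> 1" "\<And>v. pdeg (f1 v) \<le> 1"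
    and "\<And>c. pdeg (f0 (i, c)) = 0" "\<And>c. pdeg (f1 (i, c)) = 0"
    and "pdeg q \<le> D"
  shows "pdeg (poly_subst f1 q - poly_subst f0 q) \<le> D - 1"
proof -
  have eq: "poly_subst f1 q - poly_subst f0 q =
      (\<Sum>m\<in>keys q. single 0 (lookup q m) * ((\<Prod>v\<in>keys m. f1 v) - (\<Prod>v\<in>keys m. f0 v)))"
    by (simp add: poly_subst_def sum_subtractf algebra_simps)
  have "pdeg ((\<Prod>v\<in>keys m. f1 v) - (\<Prod>v\<in>keys m. f0 v)) \<le> D - 1" if m: "m \<in> keys q" for m
  proof (cases "\<exists>v\<in>keys m. fst v = i")
    case False
    then have "(\<Prod>v\<in>keys m. f1 v) = (\<Prod>v\<in>keys m. f0 v)"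
      by (intro prod.cong refl assms(1)) auto
    then show ?thesis by simp
  next
    case True
    then obtain v0 where v0: "v0 \<in> keys m" "fst v0 = i" by blast
    have "card (keys m) \<le> D"
      using card_keys_le_monom_deg[of m] assms(6) m by (auto simp: pdeg_le_iff)
    have bound: "pdeg (\<Prod>v\<in>keys m. f v) \<le> D - 1" if "\<And>v. pdeg (f v) \<le> 1" "pdeg (f v0) = 0" for f
    proof -
      have "pdeg (\<Prod>v\<in>keys m. f v) \<le> (\<Sum>v\<in>keys m. if v = v0 then 0 else 1)"
        by (rule pdeg_prod_le) (use that in auto)
      also have "\<dots> = card (keys m) - 1"
        using v0(1) by (simp add: sum.If_cases Int_absorb1 Diff_eq[symmetric] card_Diff_singleton)
      finally show ?thesis using \<open>card (keys m) \<le> D\<close> by simp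
    qed
    have "pdeg (f1 v0) = 0" "pdeg (f0 v0) = 0"
      using assms(4,5)[of "snd v0"] v0(2) by (metis prod.collapse)+
    then show ?thesis
      using bound[of f1] bound[of f0] assms(2,3) by (intro pdeg_diff_le) auto
  qed
  then show ?thesis unfolding eq by (intro pdeg_sum_le pdeg_const_mult_le)
qed

lemma subst_eq_if_pdeg_zero:
  assumes "pdeg q = 0"
  shows "poly_subst f1 q = poly_subst f0 q"
  unfolding poly_subst_def
proof (rule sum.cong[OF refl])
  fix m assume "m \<in> keys q"
  then have "monom_deg m = 0"
    using assms pdeg_le_iff[of q 0] by simp
  then have "keys m = {}"
    using card_keys_le_monom_deg[of m] by simp
  then show "single 0 (lookup q m) * (\<Prod>v\<in>keys m. f1 v) = single 0 (lookup q m) * (\<Prod>v\<in>keys m. f0 v)"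
    by simp
qed

section \<open>Sums of squares on subcubes\<close>

text \<open>A set \<open>\<rho>\<close> of literals stands for the restriction making all of them false.\<close>

definition subcube :: "var set \<Rightarrow> (nat \<Rightarrow> bool) set" where
  "subcube \<rho> = {b. \<forall>l\<in>\<rho>. bool_point b l = 0}"

locale twin_constraints =
  fixes n k :: nat and Q :: "rpoly list"
  assumes constraints_bounded: "\<forall>q\<in>set Q. pdeg q \<le> k \<and> pvars q \<subseteq> twin_vars n"
begin

lemma constraint_nth: "j < length Q \<Longrightarrow> pdeg (Q ! j) \<le> k \<and> pvars (Q ! j) \<subseteq> twin_vars n"
  using constraints_bounded nth_mem by blast

definition sos_eval :: "(nat \<Rightarrow> bool) \<Rightarrow> rpoly list \<Rightarrow> rpoly list \<Rightarrow> real" where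
  "sos_eval b rs ts = (\<Sum>r\<leftarrow>rs. poly_eval (bool_point b) r ^ 2)
     + (\<Sum>j<length Q. poly_eval (bool_point b) (ts ! j) * poly_eval (bool_point b) (Q ! j))"

text \<open>Only values on Boolean points are recorded: this makes restricting and gluing easy, and
  \<open>in_bool_ideal_complete\<close> turns such a representation back into a polynomial identity.\<close>

definition sos_rep :: "var set \<Rightarrow> nat \<Rightarrow> nat \<Rightarrow> ((nat \<Rightarrow> bool) \<Rightarrow> real) \<Rightarrow> bool" where
  "sos_rep \<rho> e c h \<longleftrightarrow> (\<exists>rs ts. length ts = length Q \<and>
     (\<forall>r\<in>set rs. pdeg r \<le> e \<and> pvars r \<subseteq> twin_vars n) \<and>
     (\<forall>t\<in>set ts. pdeg t \<le> c - k \<and> pvars t \<subseteq> twin_vars n) \<and>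
     (\<forall>b\<in>subcube \<rho>. h b = sos_eval b rs ts))"

definition sos_refutes :: "var set \<Rightarrow> nat \<Rightarrow> nat \<Rightarrow> bool" where
  "sos_refutes \<rho> e c \<longleftrightarrow> sos_rep \<rho> e c (\<lambda>_. - 1)"

lemma sos_repI:
  assumes "length ts = length Q"
    and "\<And>r. r \<in> set rs \<Longrightarrow> pdeg r \<le> e \<and> pvars r \<subseteq> twin_vars n"
    and "\<And>t. t \<in> set ts \<Longrightarrow> pdeg t \<le> c - k \<and> pvars t \<subseteq> twin_vars n"
    and "\<And>b. b \<in> subcube \<rho> \<Longrightarrow> h b = sos_eval b rs ts"
  shows "sos_rep \<rho> e c h"
  unfolding sos_rep_def using assms by blast

lemma sos_repE:
  assumes "sos_rep \<rho> e c h"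
  obtains rs ts where "length ts = length Q"
    and "\<And>r. r \<in> set rs \<Longrightarrow> pdeg r \<le> e \<and> pvars r \<subseteq> twin_vars n"
    and "\<And>t. t \<in> set ts \<Longrightarrow> pdeg t \<le> c - k \<and> pvars t \<subseteq> twin_vars n"
    and "\<And>b. b \<in> subcube \<rho> \<Longrightarrow> h b = sos_eval b rs ts"
  using assms unfolding sos_rep_def by blast

lemma sos_rep_cong:
  assumes "sos_rep \<rho> e c h" "\<And>b. b \<in> subcube \<rho> \<Longrightarrow> h b = h' b"
  shows "sos_rep \<rho> e c h'"
  using assms unfolding sos_rep_def by metis

lemma sos_rep_mono:
  assumes "sos_rep \<rho> e c h" "e \<le> e'" "c \<le> c'"
  shows "sos_rep \<rho> e' c' h"
proof -
  obtain rs ts where "length ts = length Q"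
    and "\<And>r. r \<in> set rs \<Longrightarrow> pdeg r \<le> e \<and> pvars r \<subseteq> twin_vars n"
    and "\<And>t. t \<in> set ts \<Longrightarrow> pdeg t \<le> c - k \<and> pvars t \<subseteq> twin_vars n"
    and "\<And>b. b \<in> subcube \<rho> \<Longrightarrow> h b = sos_eval b rs ts"
    using assms(1) by (elim sos_repE) blast
  moreover have "c - k \<le> c' - k" using assms(3) by simp
  ultimately show ?thesis
    using assms(2) by (intro sos_repI[of ts rs]) (auto intro: le_trans)
qed

lemma sos_rep_add:
  assumes "sos_rep \<rho> e c h1" "sos_rep \<rho> e c h2"
  shows "sos_rep \<rho> e c (\<lambda>b. h1 b + h2 b)"
proof -
  obtain rs1 ts1 where 1: "length ts1 = length Q"
    "\<And>r. r \<in> set rs1 \<Longrightarrow> pdeg r \<le> e \<and> pvars r \<subseteq> twin_vars n"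
    "\<And>t. t \<in> set ts1 \<Longrightarrow> pdeg t \<le> c - k \<and> pvars t \<subseteq> twin_vars n"
    "\<And>b. b \<in> subcube \<rho> \<Longrightarrow> h1 b = sos_eval b rs1 ts1"
    using assms(1) by (elim sos_repE) blast
  obtain rs2 ts2 where 2: "length ts2 = length Q"
    "\<And>r. r \<in> set rs2 \<Longrightarrow> pdeg r \<le> e \<and> pvars r \<subseteq> twin_vars n"
    "\<And>t. t \<in> set ts2 \<Longrightarrow> pdeg t \<le> c - k \<and> pvars t \<subseteq> twin_vars n"
    "\<And>b. b \<in> subcube \<rho> \<Longrightarrow> h2 b = sos_eval b rs2 ts2"
    using assms(2) by (elim sos_repE) blast
  define ts where "ts = map (\<lambda>j. ts1 ! j + ts2 ! j) [0..<length Q]"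
  show ?thesis
  proof (rule sos_repI[of ts "rs1 @ rs2"])
    fix t assume "t \<in> set ts"
    then obtain j where "j < length Q" "t = ts1 ! j + ts2 ! j" by (auto simp: ts_def)
    then show "pdeg t \<le> c - k \<and> pvars t \<subseteq> twin_vars n"
      using 1(1,3) 2(1,3) nth_mem by (simp add: pdeg_add_le pvars_add_subset)
  next
    fix b assume "b \<in> subcube \<rho>"
    then show "h1 b + h2 b = sos_eval b (rs1 @ rs2) ts"
      by (simp add: 1(4) 2(4) sos_eval_def ts_def sum.distrib[symmetric] algebra_simps)
  next
    fix r assume "r \<in> set (rs1 @ rs2)"
    then show "pdeg r \<le> e \<and> pvars r \<subseteq> twin_vars n" using 1(2) 2(2) by auto
  qed (simp add: ts_def)
qed

lemma sos_rep_zero: "sos_rep \<rho> e c (\<lambda>_. 0)"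
  by (rule sos_repI[of "replicate (length Q) 0" "[]"]) (auto simp: sos_eval_def)

lemma sos_rep_sum:
  "finite I \<Longrightarrow> (\<And>x. x \<in> I \<Longrightarrow> sos_rep \<rho> e c (f x)) \<Longrightarrow> sos_rep \<rho> e c (\<lambda>b. \<Sum>x\<in>I. f x b)"
  by (induction I rule: finite_induct) (simp_all add: sos_rep_zero sos_rep_add)

lemma sos_rep_scale:
  assumes "sos_rep \<rho> e c h" "0 \<le> a"
  shows "sos_rep \<rho> e c (\<lambda>b. a * h b)"
proof -
  obtain rs ts where 1: "length ts = length Q"
    "\<And>r. r \<in> set rs \<Longrightarrow> pdeg r \<le> e \<and> pvars r \<subseteq> twin_vars n"
    "\<And>t. t \<in> set ts \<Longrightarrow> pdeg t \<le> c - k \<and> pvars t \<subseteq> twin_vars n"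
    "\<And>b. b \<in> subcube \<rho> \<Longrightarrow> h b = sos_eval b rs ts"
    using assms(1) by (elim sos_repE) blast
  show ?thesis
  proof (rule sos_repI[of "map (\<lambda>t. single 0 a * t) ts" "map (\<lambda>r. single 0 (sqrt a) * r) rs"])
    fix b assume "b \<in> subcube \<rho>"
    moreover have "(\<Sum>r\<leftarrow>rs. (sqrt a * poly_eval (bool_point b) r)\<^sup>2) = a * (\<Sum>r\<leftarrow>rs. (poly_eval (bool_point b) r)\<^sup>2)"
      using assms(2) by (induction rs) (auto simp: power_mult_distrib algebra_simps)
    ultimately show "a * h b = sos_eval b (map (\<lambda>r. single 0 (sqrt a) * r) rs) (map (\<lambda>t. single 0 a * t) ts)"
      using 1(1) by (simp add: 1(4) sos_eval_def o_def sum_distrib_left algebra_simps)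
  next
    fix r assume "r \<in> set (map (\<lambda>r. single 0 (sqrt a) * r) rs)"
    then obtain x where "x \<in> set rs" "r = single 0 (sqrt a) * x" by auto
    with 1(2)[of x] show "pdeg r \<le> e \<and> pvars r \<subseteq> twin_vars n"
      by (simp add: pdeg_const_mult_le pvars_mult_subset)
  next
    fix t assume "t \<in> set (map (\<lambda>t. single 0 a * t) ts)"
    then obtain x where "x \<in> set ts" "t = single 0 a * x" by auto
    with 1(3)[of x] show "pdeg t \<le> c - k \<and> pvars t \<subseteq> twin_vars n"
      by (simp add: pdeg_const_mult_le pvars_mult_subset)
  qed (simp add: 1(1))
qed

lemma sos_rep_square: "pdeg r \<le> e \<Longrightarrow> pvars r \<subseteq> twin_vars n \<Longrightarrow> sos_rep \<rho> e c (\<lambda>b. poly_eval (bool_point b) r ^ 2)"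
  by (rule sos_repI[of "replicate (length Q) 0" "[r]"]) (auto simp: sos_eval_def)

lemma sos_rep_const: "0 \<le> x \<Longrightarrow> sos_rep \<rho> e c (\<lambda>_. x)"
  using sos_rep_square[of "single 0 (sqrt x)" e \<rho> c] by simp

end

section \<open>Gluing the two branches of a variable\<close>

definition var_prod :: "var set \<Rightarrow> rpoly" where
  "var_prod S = (\<Prod>v\<in>S. Var v)"

lemma poly_eval_var_prod: "poly_eval (bool_point b) (var_prod S) = (\<Prod>v\<in>S. bool_point b v)"
  by (simp add: var_prod_def)

lemma pdeg_var_prod_le: "finite S \<Longrightarrow> pdeg (var_prod S) \<le> card S"
  unfolding var_prod_def by (rule pdeg_prod_Var_le)

lemma pvars_var_prod_subset: "S \<subseteq> V \<Longrightarrow> pvars (var_prod S) \<subseteq> V"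
  unfolding var_prod_def by (intro pvars_prod_subset pvars_Var_subset) auto

definition assign_subst :: "nat \<Rightarrow> bool \<Rightarrow> var \<Rightarrow> rpoly" where
  "assign_subst i c v = (if fst v = i then (if snd v = c then 1 else 0) else Var v)"

lemma poly_eval_assign_subst: "poly_eval (bool_point b) (assign_subst i c v) = bool_point (b(i := c)) v"
  by (auto simp: assign_subst_def bool_point_def)

lemma pdeg_assign_subst_le: "pdeg (assign_subst i c v) \<le> 1"
  by (simp add: assign_subst_def)

lemma pvars_assign_subst_subset: "v \<in> V \<Longrightarrow> pvars (assign_subst i c v) \<subseteq> V"
  by (simp add: assign_subst_def pvars_Var_subset)

lemma pdeg_subst_assign_le: "pdeg p \<le> d \<Longrightarrow> pdeg (poly_subst (assign_subst i c) p) \<le> d"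
  by (rule pdeg_subst_linear_le[OF pdeg_assign_subst_le])

lemma pvars_subst_assign_subset: "pvars p \<subseteq> V \<Longrightarrow> pvars (poly_subst (assign_subst i c) p) \<subseteq> V"
  by (rule pvars_subst_subset[OF _ pvars_assign_subst_subset])

lemma poly_eval_subst_assign:
  "poly_eval (bool_point b) (poly_subst (assign_subst i c) p) = poly_eval (bool_point (b(i := c))) p"
  by (rule poly_eval_subst_bool_point) (rule poly_eval_assign_subst)

lemma eval_split_on_var:
  "F b = F (b(i := c)) + bool_point b (i, \<not> c) * (F (b(i := \<not> c)) - F (b(i := c)))"
  by (cases "b i = c") (auto simp: bool_point_def fun_upd_idem)

lemma split_set_card_le:
  assumes "finite S" "card S + 1 \<le> 2 * E"
  obtains S1 S2 where "S = S1 \<union> S2" "S1 \<inter> S2 = {}" "card S1 + 1 \<le> E" "card S2 \<le> E"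
proof -
  obtain S1 where S1: "S1 \<subseteq> S" "card S1 = min (card S) (E - 1)"
    using obtain_subset_with_card_n[of "min (card S) (E - 1)" S] by auto
  have "card (S - S1) \<le> E"
    using assms S1 finite_subset[OF S1(1) assms(1)] by (simp add: card_Diff_subset)
  moreover have "card S1 + 1 \<le> E"
    using assms(2) S1(2) by auto
  ultimately show ?thesis
    using S1(1) by (intro that[of S1 "S - S1"]) auto
qed

context twin_constraints
begin

text \<open>Multiplying a refutation of the branch where \<open>l\<close> is false by the (Boolean) indicator of that
  branch, i.e. by the twin literal, costs one degree.\<close>

lemma sos_rep_neg_twin:
  assumes "sos_refutes (insert l \<rho>) e c" "k \<le> c" "l \<in> twin_vars n"
  shows "sos_rep \<rho> (e + 1) (c + 1) (\<lambda>b. - bool_point b (twin l))"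
proof -
  obtain rs ts where 1: "length ts = length Q"
    "\<And>r. r \<in> set rs \<Longrightarrow> pdeg r \<le> e \<and> pvars r \<subseteq> twin_vars n"
    "\<And>t. t \<in> set ts \<Longrightarrow> pdeg t \<le> c - k \<and> pvars t \<subseteq> twin_vars n"
    "\<And>b. b \<in> subcube (insert l \<rho>) \<Longrightarrow> - 1 = sos_eval b rs ts"
    using assms(1) unfolding sos_refutes_def by (elim sos_repE) blast
  let ?L = "Var (twin l)"
  have L: "pvars ?L \<subseteq> twin_vars n"
    by (rule pvars_Var_subset) (rule twin_in_twin_vars[OF assms(3)])
  show ?thesis
  proof (rule sos_repI[of "map (\<lambda>t. ?L * t) ts" "map (\<lambda>r. ?L * r) rs"])
    fix r assume "r \<in> set (map (\<lambda>r. ?L * r) rs)"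
    then obtain x where "x \<in> set rs" "r = ?L * x" by auto
    with 1(2)[of x] L show "pdeg r \<le> e + 1 \<and> pvars r \<subseteq> twin_vars n"
      by (simp add: pdeg_Var_mult_le pvars_mult_subset)
  next
    fix t assume "t \<in> set (map (\<lambda>t. ?L * t) ts)"
    then obtain x where "x \<in> set ts" "t = ?L * x" by auto
    moreover have "Suc (c - k) = c + 1 - k" using assms(2) by simp
    ultimately show "pdeg t \<le> c + 1 - k \<and> pvars t \<subseteq> twin_vars n"
      using 1(3)[of x] L by (metis pdeg_Var_mult_le pvars_mult_subset)
  next
    fix b assume b: "b \<in> subcube \<rho>"
    let ?x = "bool_point b (twin l)"
    have "sos_eval b (map (\<lambda>r. ?L * r) rs) (map (\<lambda>t. ?L * t) ts) = ?x * sos_eval b rs ts"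
    proof -
      have "(?x * y) ^ 2 = ?x * y ^ 2" for y
        using bool_point_cases[of b "twin l"] by (auto simp: power2_eq_square)
      then show ?thesis
        using 1(1) by (simp add: sos_eval_def o_def sum_list_const_mult sum_distrib_left algebra_simps)
    qed
    moreover have "?x = 1 \<Longrightarrow> b \<in> subcube (insert l \<rho>)"
      using b bool_point_twin[of b l] by (auto simp: subcube_def)
    ultimately show "- ?x = sos_eval b (map (\<lambda>r. ?L * r) rs) (map (\<lambda>t. ?L * t) ts)"
      using 1(4) bool_point_cases[of b "twin l"] by force
  qed (simp add: 1(1))
qed

lemma sos_rep_neg_twin_var_prod:
  assumes "sos_rep \<rho> E C (\<lambda>b. - bool_point b (twin l))"
    and "finite S" "card S + 1 \<le> E" "S \<subseteq> twin_vars n" "l \<in> twin_vars n"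
  shows "sos_rep \<rho> E C (\<lambda>b. - (bool_point b (twin l) * (\<Prod>v\<in>S. bool_point b v)))"
proof -
  let ?A = "Var (twin l) * (1 - var_prod S)"
  have "pdeg ?A \<le> E"
    using pdeg_Var_mult_le[OF pdeg_diff_le[OF _ pdeg_var_prod_le[OF assms(2)]], of 1 "twin l"] assms(3)
    by simp
  moreover have "pvars ?A \<subseteq> twin_vars n"
    by (intro pvars_mult_subset pvars_diff_subset pvars_Var_subset pvars_var_prod_subset
        twin_in_twin_vars assms(4,5)) simp
  ultimately have "sos_rep \<rho> E C (\<lambda>b. - bool_point b (twin l) + poly_eval (bool_point b) ?A ^ 2)"
    by (intro sos_rep_add assms(1) sos_rep_square)
  then show ?thesis
  proof (rule sos_rep_cong)
    fix b
    show "- bool_point b (twin l) + poly_eval (bool_point b) ?A ^ 2 =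
        - (bool_point b (twin l) * (\<Prod>v\<in>S. bool_point b v))"
      using bool_point_cases[of b "twin l"] prod_bool_point_cases[of b S]
      by (auto simp: poly_eval_var_prod power2_eq_square)
  qed
qed

text \<open>Completing a square: for 0/1 values \<open>a\<close>, \<open>p\<close> and \<open>\<sigma> = 2 s \<tau>\<close>,
  \<open>(a + \<sigma> p)\<^sup>2 + \<sigma>\<^sup>2 (1 - p)\<^sup>2 - a = 4 \<tau> (s a p + \<tau>)\<close>; splitting \<open>S\<close> into two parts keeps
  both squares within degree \<open>E\<close>.\<close>

lemma sos_rep_twin_var_prod_pm:
  assumes K: "sos_rep \<rho> E C (\<lambda>b. - bool_point b (twin l))"
    and S: "finite S" "card S + 1 \<le> 2 * E" "S \<subseteq> twin_vars n"
    and l: "l \<in> twin_vars n" and s: "s = 1 \<or> s = - 1" and \<tau>: "\<tau> > 0"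
  shows "sos_rep \<rho> E C (\<lambda>b. s * bool_point b (twin l) * (\<Prod>v\<in>S. bool_point b v) + \<tau>)"
proof -
  obtain S1 S2 where S12: "S = S1 \<union> S2" "S1 \<inter> S2 = {}" "card S1 + 1 \<le> E" "card S2 \<le> E"
    using split_set_card_le[OF S(1,2)] .
  have fin: "finite S1" "finite S2" and vars: "S1 \<subseteq> twin_vars n" "S2 \<subseteq> twin_vars n"
    using S(1,3) S12(1) by auto
  define \<sigma> where "\<sigma> = s * (2 * \<tau>)"
  let ?A = "Var (twin l) * var_prod S1 + single 0 \<sigma> * var_prod S2"
  let ?B = "single 0 \<sigma> * (1 - var_prod S2)"
  have "pdeg ?A \<le> E" "pdeg ?B \<le> E"
    using pdeg_Var_mult_le[OF pdeg_var_prod_le[OF fin(1)], of "twin l"]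
      pdeg_const_mult_le[OF pdeg_var_prod_le[OF fin(2)], of \<sigma>]
      pdeg_const_mult_le[OF pdeg_diff_le[OF _ pdeg_var_prod_le[OF fin(2)]], of 1 \<sigma>] S12(3,4)
    by (auto intro!: pdeg_add_le)
  moreover have "pvars ?A \<subseteq> twin_vars n" "pvars ?B \<subseteq> twin_vars n"
    by (intro pvars_add_subset pvars_mult_subset pvars_diff_subset pvars_var_prod_subset
        pvars_Var_subset twin_in_twin_vars l vars; simp)+
  moreover have "sos_rep \<rho> E C (\<lambda>b. - (bool_point b (twin l) * (\<Prod>v\<in>S1. bool_point b v)))"
    by (rule sos_rep_neg_twin_var_prod[OF K fin(1) S12(3) vars(1) l])
  ultimately have "sos_rep \<rho> E C (\<lambda>b. (1 / (4 * \<tau>)) * (poly_eval (bool_point b) ?A ^ 2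
      + poly_eval (bool_point b) ?B ^ 2 + - (bool_point b (twin l) * (\<Prod>v\<in>S1. bool_point b v))))"
    using \<tau> by (intro sos_rep_scale sos_rep_add sos_rep_square) simp_all
  then show ?thesis
  proof (rule sos_rep_cong)
    fix b
    have "(\<Prod>v\<in>S. bool_point b v) = (\<Prod>v\<in>S1. bool_point b v) * (\<Prod>v\<in>S2. bool_point b v)"
      unfolding S12(1) using fin S12(2) by (rule prod.union_disjoint)
    then show "(1 / (4 * \<tau>)) * (poly_eval (bool_point b) ?A ^ 2 + poly_eval (bool_point b) ?B ^ 2
        + - (bool_point b (twin l) * (\<Prod>v\<in>S1. bool_point b v)))
      = s * bool_point b (twin l) * (\<Prod>v\<in>S. bool_point b v) + \<tau>"
      using bool_point_cases[of b "twin l"] prod_bool_point_cases[of b S1]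
        prod_bool_point_cases[of b S2] \<tau> s
      by (auto simp: poly_eval_var_prod \<sigma>_def power2_eq_square field_simps)
  qed
qed

lemma sos_rep_twin_mult_poly_pm:
  assumes K: "sos_rep \<rho> E C (\<lambda>b. - bool_point b (twin l))"
    and H: "pdeg H \<le> 2 * E - 1" "pvars H \<subseteq> twin_vars n" and E: "E \<ge> 1"
    and l: "l \<in> twin_vars n" and s: "s = 1 \<or> s = - 1" and \<epsilon>: "\<epsilon> > 0"
  shows "sos_rep \<rho> E C (\<lambda>b. s * bool_point b (twin l) * poly_eval (bool_point b) H + \<epsilon>)"
proof -
  define A where "A = (\<Sum>m\<in>keys H. \<bar>lookup H m\<bar>)"
  define \<delta> where "\<delta> = \<epsilon> / (1 + A)"
  have "A \<ge> 0" unfolding A_def by (simp add: sum_nonneg)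
  then have "\<delta> > 0" "A * \<delta> \<le> \<epsilon>"
    using \<epsilon> by (simp_all add: \<delta>_def field_simps)
  have monomial: "sos_rep \<rho> E C (\<lambda>b. s * bool_point b (twin l) * (lookup H m * (\<Prod>v\<in>keys m. bool_point b v))
      + \<bar>lookup H m\<bar> * \<delta>)" if m: "m \<in> keys H" for m
  proof -
    have "card (keys m) + 1 \<le> 2 * E"
      using card_keys_le_monom_deg[of m] H(1) m E by (auto simp: pdeg_le_iff)
    moreover have "keys m \<subseteq> twin_vars n"
      using H(2) m by (auto simp: pvars_def)
    moreover have "sgn (lookup H m) * s = 1 \<or> sgn (lookup H m) * s = - 1"
      using m s by (auto simp: in_keys_iff sgn_if)
    ultimately have "sos_rep \<rho> E C (\<lambda>b. \<bar>lookup H m\<bar> * (sgn (lookup H m) * s * bool_point b (twin l)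
        * (\<Prod>v\<in>keys m. bool_point b v) + \<delta>))"
      by (intro sos_rep_scale sos_rep_twin_var_prod_pm[OF K] l \<open>\<delta> > 0\<close>) simp_all
    then show ?thesis
      by (rule sos_rep_cong) (use m in \<open>cases "lookup H m > 0"; auto simp: in_keys_iff sgn_if algebra_simps\<close>)
  qed
  have "sos_rep \<rho> E C (\<lambda>b. (\<Sum>m\<in>keys H. s * bool_point b (twin l) * (lookup H m * (\<Prod>v\<in>keys m. bool_point b v))
      + \<bar>lookup H m\<bar> * \<delta>) + (\<epsilon> - A * \<delta>))"
    using \<open>A * \<delta> \<le> \<epsilon>\<close> by (intro sos_rep_add sos_rep_sum monomial sos_rep_const) simp_all
  then show ?thesis
    by (rule sos_rep_cong)
      (simp add: poly_eval_bool_point A_def sum.distrib sum_distrib_left sum_distrib_right)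
qed

text \<open>Setting \<open>x\<^sub>i := c\<close> in the multipliers and comparing the constraints at \<open>x\<^sub>i = c\<close> and
  \<open>x\<^sub>i = \<not> c\<close>: their difference has degree below \<open>k\<close>.\<close>

definition branch_defect :: "nat \<Rightarrow> bool \<Rightarrow> rpoly list \<Rightarrow> rpoly" where
  "branch_defect i c ts = (\<Sum>j<length Q. poly_subst (assign_subst i c) (ts ! j) *
     (poly_subst (assign_subst i (\<not> c)) (Q ! j) - poly_subst (assign_subst i c) (Q ! j)))"

lemma pdeg_branch_defect_le:
  assumes "length ts = length Q" "\<And>t. t \<in> set ts \<Longrightarrow> pdeg t \<le> C - k" "k \<le> C"
  shows "pdeg (branch_defect i c ts) \<le> C - 1"
  unfolding branch_defect_def
proof (rule pdeg_sum_le)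
  fix j assume "j \<in> {..<length Q}"
  then have j: "j < length Q" "pdeg (ts ! j) \<le> C - k"
    using assms(1,2) by auto
  let ?d = "poly_subst (assign_subst i (\<not> c)) (Q ! j) - poly_subst (assign_subst i c) (Q ! j)"
  show "pdeg (poly_subst (assign_subst i c) (ts ! j) * ?d) \<le> C - 1"
  proof (cases "k = 0")
    case True
    then have "?d = 0"
      using constraint_nth[OF j(1)] subst_eq_if_pdeg_zero by simp
    then show ?thesis by simp
  next
    case False
    have "pdeg ?d \<le> k - 1"
      using constraint_nth[OF j(1)]
      by (intro pdeg_subst_diff_le) (auto simp: assign_subst_def)
    then have "pdeg (poly_subst (assign_subst i c) (ts ! j) * ?d) \<le> (C - k) + (k - 1)"
      by (intro pdeg_mult_le pdeg_subst_linear_le pdeg_assign_subst_le j(2))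
    then show ?thesis using False assms(3) by simp
  qed
qed

lemma pvars_branch_defect_subset:
  assumes "length ts = length Q" "\<And>t. t \<in> set ts \<Longrightarrow> pvars t \<subseteq> twin_vars n"
  shows "pvars (branch_defect i c ts) \<subseteq> twin_vars n"
  unfolding branch_defect_def
proof (rule pvars_sum_subset)
  fix j assume "j \<in> {..<length Q}"
  then have "pvars (ts ! j) \<subseteq> twin_vars n" "pvars (Q ! j) \<subseteq> twin_vars n"
    using assms constraint_nth by auto
  then show "pvars (poly_subst (assign_subst i c) (ts ! j) * (poly_subst (assign_subst i (\<not> c)) (Q ! j)
      - poly_subst (assign_subst i c) (Q ! j))) \<subseteq> twin_vars n"
    by (intro pvars_mult_subset pvars_diff_subset pvars_subst_assign_subset)
qed

lemma sos_eval_subst_assign: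
  assumes "length ts = length Q"
  shows "sos_eval b (map (poly_subst (assign_subst i c)) rs) (map (poly_subst (assign_subst i c)) ts) =
    sos_eval (b(i := c)) rs ts + bool_point b (i, \<not> c) * poly_eval (bool_point b) (branch_defect i c ts)"
proof -
  let ?x = "bool_point b (i, \<not> c)" and ?ev = "\<lambda>\<beta> p. poly_eval (bool_point \<beta>) p"
  have split: "?ev b (Q ! j) = ?ev (b(i := c)) (Q ! j)
      + ?x * (?ev (b(i := \<not> c)) (Q ! j) - ?ev (b(i := c)) (Q ! j))" for j
    by (rule eval_split_on_var)
  have defect: "?ev b (branch_defect i c ts) = (\<Sum>j<length Q. ?ev (b(i := c)) (ts ! j) *
      (?ev (b(i := \<not> c)) (Q ! j) - ?ev (b(i := c)) (Q ! j)))"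
    by (simp add: branch_defect_def poly_eval_subst_assign)
  have "sos_eval b (map (poly_subst (assign_subst i c)) rs) (map (poly_subst (assign_subst i c)) ts) =
      (\<Sum>r\<leftarrow>rs. ?ev (b(i := c)) r ^ 2) + (\<Sum>j<length Q. ?ev (b(i := c)) (ts ! j) *
        (?ev (b(i := c)) (Q ! j) + ?x * (?ev (b(i := \<not> c)) (Q ! j) - ?ev (b(i := c)) (Q ! j))))"
    using assms by (simp add: sos_eval_def poly_eval_subst_assign o_def split)
  also have "\<dots> = sos_eval (b(i := c)) rs ts + ?x * ?ev b (branch_defect i c ts)"
    unfolding defect sos_eval_def add.assoc sum_distrib_left sum.distrib[symmetric]
    by (simp add: algebra_simps)
  finally show ?thesis .
qed

lemma sos_rep_branch_defect:
  assumes \<rho>: "i \<notin> fst ` \<rho>" and P: "sos_refutes (insert (i, \<not> c) \<rho>) E C" and "k \<le> C"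
  shows "\<exists>H. pdeg H \<le> C - 1 \<and> pvars H \<subseteq> twin_vars n \<and>
    sos_rep \<rho> E C (\<lambda>b. - 1 + bool_point b (i, \<not> c) * poly_eval (bool_point b) H)"
proof -
  obtain rs ts where 1: "length ts = length Q"
    "\<And>r. r \<in> set rs \<Longrightarrow> pdeg r \<le> E \<and> pvars r \<subseteq> twin_vars n"
    "\<And>t. t \<in> set ts \<Longrightarrow> pdeg t \<le> C - k \<and> pvars t \<subseteq> twin_vars n"
    "\<And>b. b \<in> subcube (insert (i, \<not> c) \<rho>) \<Longrightarrow> - 1 = sos_eval b rs ts"
    using P unfolding sos_refutes_def by (elim sos_repE) blast
  let ?f = "poly_subst (assign_subst i c)"
  have "sos_rep \<rho> E C (\<lambda>b. - 1 + bool_point b (i, \<not> c) * poly_eval (bool_point b) (branch_defect i c ts))"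
  proof (rule sos_repI[of "map ?f ts" "map ?f rs"])
    fix r assume "r \<in> set (map ?f rs)"
    then obtain x where "x \<in> set rs" "r = ?f x" by auto
    with 1(2)[of x] show "pdeg r \<le> E \<and> pvars r \<subseteq> twin_vars n"
      by (simp add: pdeg_subst_assign_le pvars_subst_assign_subset)
  next
    fix t assume "t \<in> set (map ?f ts)"
    then obtain x where "x \<in> set ts" "t = ?f x" by auto
    with 1(3)[of x] show "pdeg t \<le> C - k \<and> pvars t \<subseteq> twin_vars n"
      by (simp add: pdeg_subst_assign_le pvars_subst_assign_subset)
  next
    fix b assume "b \<in> subcube \<rho>"
    then have "b(i := c) \<in> subcube (insert (i, \<not> c) \<rho>)"
      using \<rho> by (force simp: subcube_def bool_point_def)
    then show "- 1 + bool_point b (i, \<not> c) * poly_eval (bool_point b) (branch_defect i c ts)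
        = sos_eval b (map ?f rs) (map ?f ts)"
      by (simp add: sos_eval_subst_assign[OF 1(1)] 1(4))
  qed (simp add: 1(1))
  then show ?thesis
    using pdeg_branch_defect_le[OF 1(1)] pvars_branch_defect_subset[OF 1(1)] 1(3) \<open>k \<le> C\<close> by blast
qed

text \<open>The branch \<open>l\<close> false yields \<open>- [twin l]\<close>, the branch \<open>l\<close> true yields
  \<open>- 1 + [twin l] H\<close> with \<open>deg H < C\<close>, and \<open>- [twin l] H + 1/2\<close> follows from \<open>- [twin l]\<close> by
  completing squares; adding the last two and doubling gives \<open>- 1\<close>.\<close>

lemma sos_refutes_glue:
  assumes l: "l = (i, c)" "i < n" "i \<notin> fst ` \<rho>"
    and P0: "sos_refutes (insert l \<rho>) e C" and P1: "sos_refutes (insert (twin l) \<rho>) (e + 1) (C + 1)"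
    and "k \<le> C" "C + 1 \<le> 2 * (e + 1)"
  shows "sos_refutes \<rho> (e + 1) (C + 1)"
proof -
  have l_vars: "l \<in> twin_vars n" using l by (simp add: twin_vars_def)
  have twin: "twin l = (i, \<not> c)" using l by (simp add: twin_def)
  have neg: "sos_rep \<rho> (e + 1) (C + 1) (\<lambda>b. - bool_point b (twin l))"
    by (rule sos_rep_neg_twin[OF P0 \<open>k \<le> C\<close> l_vars])
  obtain H where H: "pdeg H \<le> C" "pvars H \<subseteq> twin_vars n"
    "sos_rep \<rho> (e + 1) (C + 1) (\<lambda>b. - 1 + bool_point b (twin l) * poly_eval (bool_point b) H)"
    using sos_rep_branch_defect[OF l(3) P1[unfolded twin]] \<open>k \<le> C\<close> twin by auto
  have "pdeg H \<le> 2 * (e + 1) - 1" using H(1) \<open>C + 1 \<le> 2 * (e + 1)\<close> by simp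
  then have "sos_rep \<rho> (e + 1) (C + 1) (\<lambda>b. (- 1) * bool_point b (twin l) * poly_eval (bool_point b) H + 1 / 2)"
    by (rule sos_rep_twin_mult_poly_pm[OF neg _ H(2) _ l_vars]) simp_all
  from sos_rep_add[OF H(3) this]
  have "sos_rep \<rho> (e + 1) (C + 1) (\<lambda>b. 2 * ((- 1 + bool_point b (twin l) * poly_eval (bool_point b) H)
      + ((- 1) * bool_point b (twin l) * poly_eval (bool_point b) H + 1 / 2)))"
    by (rule sos_rep_scale) simp
  then show ?thesis
    unfolding sos_refutes_def by (rule sos_rep_cong) simp
qed

end

section \<open>Restricting the given refutation\<close>

definition falsified :: "var set \<Rightarrow> monom \<Rightarrow> bool" where
  "falsified \<rho> m \<longleftrightarrow> keys m \<inter> \<rho> \<noteq> {}"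

definition width :: "var set \<Rightarrow> monom \<Rightarrow> nat" where
  "width \<rho> m = card {v \<in> keys m. fst v \<notin> fst ` \<rho>}"

definition restrict_subst :: "var set \<Rightarrow> var \<Rightarrow> rpoly" where
  "restrict_subst \<rho> v = (if v \<in> \<rho> then 0 else if twin v \<in> \<rho> then 1 else Var v)"

lemma poly_eval_restrict_subst:
  "b \<in> subcube \<rho> \<Longrightarrow> poly_eval (bool_point b) (restrict_subst \<rho> v) = bool_point b v"
  using bool_point_twin[of b v] by (auto simp: restrict_subst_def subcube_def)

lemma pvars_restrict_subst_subset: "v \<in> V \<Longrightarrow> pvars (restrict_subst \<rho> v) \<subseteq> V"
  by (simp add: restrict_subst_def pvars_Var_subset)

lemma pdeg_restrict_subst_le:
  assumes "v \<notin> \<rho>"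
  shows "pdeg (restrict_subst \<rho> v) \<le> (if fst v \<in> fst ` \<rho> then 0 else 1)"
proof (cases "fst v \<in> fst ` \<rho>")
  case True
  then obtain c where c: "(fst v, c) \<in> \<rho>" by force
  have "c \<noteq> snd v"
  proof
    assume "c = snd v"
    with c have "v \<in> \<rho>" by simp
    with assms show False ..
  qed
  then have "c = (\<not> snd v)"
    by blast
  with c have "twin v \<in> \<rho>"
    by (simp add: twin_def)
  with assms True show ?thesis by (simp add: restrict_subst_def)
next
  case False
  then have "twin v \<notin> \<rho>"
    by (auto simp: twin_def image_iff)
  with assms False show ?thesis by (simp add: restrict_subst_def)
qed

lemma pdeg_subst_restrict_le:
  assumes "\<And>m. m \<in> keys p \<Longrightarrow> falsified \<rho> m \<or> width \<rho> m \<le> d"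
  shows "pdeg (poly_subst (restrict_subst \<rho>) p) \<le> d"
proof (rule pdeg_subst_le)
  fix m assume m: "m \<in> keys p"
  show "pdeg (\<Prod>v\<in>keys m. restrict_subst \<rho> v) \<le> d"
  proof (cases "falsified \<rho> m")
    case True
    then obtain v where "v \<in> keys m" "v \<in> \<rho>" by (auto simp: falsified_def)
    then have "(\<Prod>v\<in>keys m. restrict_subst \<rho> v) = 0"
      by (simp add: prod.remove restrict_subst_def)
    then show ?thesis by simp
  next
    case False
    then have "pdeg (\<Prod>v\<in>keys m. restrict_subst \<rho> v) \<le> (\<Sum>v\<in>keys m. if fst v \<in> fst ` \<rho> then 0 else 1)"
      by (intro pdeg_prod_le pdeg_restrict_subst_le) (auto simp: falsified_def)
    also have "\<dots> = width \<rho> m"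
      by (simp add: width_def sum.If_cases Collect_conj_eq Compl_eq)
    finally show ?thesis using assms[OF m] False by simp
  qed
qed

locale twin_refutation = twin_constraints +
  fixes rs0 ts0 :: "rpoly list" and us0 vs0 :: "nat \<Rightarrow> rpoly"
  assumes refutation: "sos_refutation n Q rs0 ts0 us0 vs0"
begin

abbreviation sig_monoms :: "monom set" where
  "sig_monoms \<equiv> significant_monomials rs0 ts0"

lemma length_ts0: "length ts0 = length Q"
  using refutation by (simp add: sos_refutation_def)

lemma pvars_refutation: "p \<in> set rs0 \<union> set ts0 \<Longrightarrow> pvars p \<subseteq> twin_vars n"
  using refutation by (auto simp: sos_refutation_def)

lemma finite_sig_monoms: "finite sig_monoms"
  by (simp add: significant_monomials_def)

lemma keys_sig_monoms: "m \<in> sig_monoms \<Longrightarrow> keys m \<subseteq> twin_vars n"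
  using pvars_refutation by (fastforce simp: significant_monomials_def pvars_def)

lemma sos_eval_refutation: "sos_eval b rs0 ts0 = - 1"
proof -
  have "- 1 = (\<Sum>r\<leftarrow>rs0. r * r) + (\<Sum>j<length Q. ts0 ! j * Q ! j)
      + (\<Sum>i<n. us0 i * bool_axiom i + vs0 i * twin_axiom i)"
    using refutation by (simp add: sos_refutation_def bool_axiom_def twin_axiom_def)
  then have "poly_eval (bool_point b) (- 1) = poly_eval (bool_point b) ((\<Sum>r\<leftarrow>rs0. r * r)
      + (\<Sum>j<length Q. ts0 ! j * Q ! j) + (\<Sum>i<n. us0 i * bool_axiom i + vs0 i * twin_axiom i))"
    by (rule arg_cong)
  then show ?thesis
    by (simp add: sos_eval_def power2_eq_square del: poly_eval_uminus poly_eval_one) simp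
qed

lemma sos_refutes_if_narrow:
  assumes "\<And>m. m \<in> sig_monoms \<Longrightarrow> falsified \<rho> m \<or> width \<rho> m \<le> d"
  shows "sos_refutes \<rho> d (d + k)"
  unfolding sos_refutes_def
proof (rule sos_repI[of "map (poly_subst (restrict_subst \<rho>)) ts0" "map (poly_subst (restrict_subst \<rho>)) rs0"])
  have "pdeg (poly_subst (restrict_subst \<rho>) p) \<le> d \<and> pvars (poly_subst (restrict_subst \<rho>) p) \<subseteq> twin_vars n"
    if "p \<in> set rs0 \<union> set ts0" for p
    using that assms pvars_subst_subset[OF pvars_refutation[OF that] pvars_restrict_subst_subset]
    by (auto simp: significant_monomials_def intro!: pdeg_subst_restrict_le)
  then show "\<And>r. r \<in> set (map (poly_subst (restrict_subst \<rho>)) rs0) \<Longrightarrow> pdeg r \<le> d \<and> pvars r \<subseteq> twin_vars n"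
    and "\<And>t. t \<in> set (map (poly_subst (restrict_subst \<rho>)) ts0) \<Longrightarrow> pdeg t \<le> d + k - k \<and> pvars t \<subseteq> twin_vars n"
    by auto
next
  fix b assume "b \<in> subcube \<rho>"
  then have "poly_eval (bool_point b) (poly_subst (restrict_subst \<rho>) p) = poly_eval (bool_point b) p" for p
    by (intro poly_eval_subst_bool_point poly_eval_restrict_subst)
  then show "- 1 = sos_eval b (map (poly_subst (restrict_subst \<rho>)) rs0) (map (poly_subst (restrict_subst \<rho>)) ts0)"
    using sos_eval_refutation[of b] length_ts0 by (simp add: sos_eval_def o_def)
qed (simp add: length_ts0)

end

section \<open>Killing the wide monomials by branching\<close>

lemma sum_card_filter_swap:
  assumes "finite A" "finite B"
  shows "(\<Sum>a\<in>A. card {b\<in>B. R a b}) = (\<Sum>b\<in>B. card {a\<in>A. R a b})"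
proof -
  have card_filter: "card {x\<in>X. P x} = (\<Sum>x\<in>X. if P x then 1 else (0::nat))" if "finite X" for X P
    using that by (simp add: sum.If_cases Int_def)
  show ?thesis
    using assms by (simp add: card_filter sum.swap[of _ A B])
qed

context twin_refutation
begin

definition wide :: "nat \<Rightarrow> var set \<Rightarrow> monom set" where
  "wide d \<rho> = {m \<in> sig_monoms. \<not> falsified \<rho> m \<and> d < width \<rho> m}"

lemma finite_wide: "finite (wide d \<rho>)"
  using finite_sig_monoms by (simp add: wide_def)

lemma sos_refutes_if_no_wide: "wide d \<rho> = {} \<Longrightarrow> sos_refutes \<rho> d (d + k)"
  by (rule sos_refutes_if_narrow) (auto simp: wide_def)

lemma wide_insert_subset: "wide d (insert l \<rho>) \<subseteq> wide d \<rho> - {m. l \<in> keys m}"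
proof
  fix m assume m: "m \<in> wide d (insert l \<rho>)"
  have "width (insert l \<rho>) m \<le> width \<rho> m"
    unfolding width_def by (rule card_mono) auto
  then show "m \<in> wide d \<rho> - {m. l \<in> keys m}"
    using m by (auto simp: wide_def falsified_def)
qed

text \<open>Averaging: each wide monomial has more than \<open>d\<close> unset variables among the at most \<open>2 n\<close>
  unset literals, so some literal occurs in a \<open>d / 2n\<close> fraction of the wide monomials.\<close>

lemma exists_frequent_literal:
  assumes "wide d \<rho> \<noteq> {}"
  shows "\<exists>l. l \<in> twin_vars n \<and> fst l \<notin> fst ` \<rho> \<and>
    d * card (wide d \<rho>) \<le> 2 * n * card {m \<in> wide d \<rho>. l \<in> keys m}"
proof (rule ccontr)
  assume neg: "\<not> ?thesis"
  define L where "L = {l \<in> twin_vars n. fst l \<notin> fst ` \<rho>}"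
  define w where "w = card (wide d \<rho>)"
  have fin: "finite L" using finite_twin_vars by (simp add: L_def)
  have card_L: "card L \<le> 2 * n"
    unfolding card_twin_vars[symmetric] L_def by (rule card_mono[OF finite_twin_vars]) auto
  have "card {l \<in> L. l \<in> keys m} = width \<rho> m" if "m \<in> wide d \<rho>" for m
  proof -
    have "keys m \<subseteq> twin_vars n" using that keys_sig_monoms by (auto simp: wide_def)
    then have "{l \<in> L. l \<in> keys m} = {v \<in> keys m. fst v \<notin> fst ` \<rho>}" by (auto simp: L_def)
    then show ?thesis by (simp add: width_def)
  qed
  then have "(\<Sum>m\<in>wide d \<rho>. Suc d) \<le> (\<Sum>m\<in>wide d \<rho>. card {l \<in> L. l \<in> keys m})"
    by (intro sum_mono) (auto simp: wide_def Suc_le_eq)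
  also have "\<dots> = (\<Sum>l\<in>L. card {m \<in> wide d \<rho>. l \<in> keys m})"
    by (rule sum_card_filter_swap[OF finite_wide fin])
  finally have big: "Suc d * w \<le> (\<Sum>l\<in>L. card {m \<in> wide d \<rho>. l \<in> keys m})"
    by (simp add: w_def mult.commute)
  have "w > 0" using assms finite_wide by (simp add: w_def card_gt_0_iff)
  then have "L \<noteq> {}" using big by auto
  have "2 * n * card {m \<in> wide d \<rho>. l \<in> keys m} < d * w" if "l \<in> L" for l
    using neg that unfolding L_def w_def by (metis (no_types, lifting) mem_Collect_eq not_le)
  then have "2 * n * (\<Sum>l\<in>L. card {m \<in> wide d \<rho>. l \<in> keys m}) < (\<Sum>l\<in>L. d * w)"
    unfolding sum_distrib_left by (rule sum_strict_mono[OF fin \<open>L \<noteq> {}\<close>])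
  also have "\<dots> \<le> 2 * n * (d * w)"
    using card_L by simp
  finally show False
    using big by (simp add: mult.commute)
qed

lemma card_wide_insert_frequent:
  assumes "d * card (wide d \<rho>) \<le> 2 * n * card {m \<in> wide d \<rho>. l \<in> keys m}" "n > 0"
  shows "real (card (wide d (insert l \<rho>))) \<le> (1 - real d / real (2 * n)) * card (wide d \<rho>)"
proof -
  define w where "w = card (wide d \<rho>)"
  define f where "f = card {m \<in> wide d \<rho>. l \<in> keys m}"
  have "card (wide d (insert l \<rho>)) \<le> card (wide d \<rho> - {m \<in> wide d \<rho>. l \<in> keys m})"
    using wide_insert_subset[of d l \<rho>] by (intro card_mono) (auto simp: finite_wide)
  also have "\<dots> = w - f"
    unfolding w_def f_def by (rule card_Diff_subset) (auto simp: finite_wide)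
  finally have "card (wide d (insert l \<rho>)) \<le> w - f" .
  moreover have "f \<le> w"
    unfolding w_def f_def by (rule card_mono) (auto simp: finite_wide)
  ultimately have "real (card (wide d (insert l \<rho>))) \<le> real w - real f"
    by (simp add: of_nat_diff)
  moreover have "real d * real w \<le> real (2 * n) * real f"
    using assms(1) unfolding w_def f_def of_nat_mult[symmetric] of_nat_le_iff .
  then have "real d / real (2 * n) * real w \<le> real f"
    using assms(2) by (simp add: pos_divide_le_eq mult.commute)
  ultimately show ?thesis
    unfolding w_def[symmetric] left_diff_distrib by simp
qed

lemma exists_shrinking_literal:
  assumes "wide d \<rho> \<noteq> {}"
  shows "\<exists>i c. i < n \<and> i \<notin> fst ` \<rho> \<and>
    real (card (wide d (insert (i, c) \<rho>))) \<le> (1 - real d / real (2 * n)) * card (wide d \<rho>)"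
proof -
  obtain i c where l: "(i, c) \<in> twin_vars n" "i \<notin> fst ` \<rho>"
    "d * card (wide d \<rho>) \<le> 2 * n * card {m \<in> wide d \<rho>. (i, c) \<in> keys m}"
    using exists_frequent_literal[OF assms] by auto
  then have "i < n" by (simp add: twin_vars_def)
  with l card_wide_insert_frequent[OF l(3)] show ?thesis by auto
qed

lemma card_wide_insert_le: "card (wide d (insert l \<rho>)) \<le> card (wide d \<rho>)"
  by (rule card_mono[OF finite_wide]) (use wide_insert_subset in blast)

definition leaf_sq_deg :: "nat \<Rightarrow> nat" where
  "leaf_sq_deg d = max d ((d + k + 1) div 2)"

lemma leaf_sq_deg: "d \<le> leaf_sq_deg d" "d + k \<le> 2 * leaf_sq_deg d"
  unfolding leaf_sq_deg_def by linarith+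

text \<open>Each branching step on a frequent literal either shrinks the set of wide monomials by the
  factor \<open>1 - d / 2n\<close> (literal false) or fixes one more variable (literal true), and is paid for
  by one degree in \<open>sos_refutes_glue\<close>.\<close>

lemma sos_refutes_by_branching:
  assumes "d \<le> 2 * n"
  shows "(1 - real d / real (2 * n)) ^ j * card (wide d \<rho>) < 1 \<Longrightarrow>
    sos_refutes \<rho> (leaf_sq_deg d + j) (d + k + j)"
proof (induction j arbitrary: \<rho>)
  case 0
  then have "wide d \<rho> = {}" using finite_wide[of d \<rho>] by simp
  from sos_refutes_if_no_wide[OF this] show ?case
    unfolding sos_refutes_def by (rule sos_rep_mono) (use leaf_sq_deg[of d] in auto)
next
  case (Suc j)
  define \<alpha> where "\<alpha> = 1 - real d / real (2 * n)"
  have \<alpha>: "0 \<le> \<alpha>" "\<alpha> \<le> 1"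
    using assms by (cases "n = 0"; simp add: \<alpha>_def field_simps)+
  show ?case using Suc.prems[folded \<alpha>_def]
  proof (induction "card ({..<n} - fst ` \<rho>)" arbitrary: \<rho> rule: less_induct)
    case less
    show ?case
    proof (cases "wide d \<rho> = {}")
      case True
      from sos_refutes_if_no_wide[OF this] show ?thesis
        unfolding sos_refutes_def by (rule sos_rep_mono) (use leaf_sq_deg[of d] in auto)
    next
      case False
      then obtain i c where l: "i < n" "i \<notin> fst ` \<rho>"
        "card (wide d (insert (i, c) \<rho>)) \<le> \<alpha> * card (wide d \<rho>)"
        using exists_shrinking_literal[OF False] unfolding \<alpha>_def by blast
      have "\<alpha> ^ j * card (wide d (insert (i, c) \<rho>)) \<le> \<alpha> ^ Suc j * card (wide d \<rho>)"
        using mult_left_mono[OF l(3), of "\<alpha> ^ j"] \<alpha> by (simp add: mult_ac)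
      then have P0: "sos_refutes (insert (i, c) \<rho>) (leaf_sq_deg d + j) (d + k + j)"
        using less.prems unfolding \<alpha>_def by (intro Suc.IH) simp
      have "card ({..<n} - fst ` insert (twin (i, c)) \<rho>) < card ({..<n} - fst ` \<rho>)"
        using l(1,2) by (intro psubset_card_mono) (auto simp: twin_def)
      moreover have "\<alpha> ^ Suc j * card (wide d (insert (twin (i, c)) \<rho>)) < 1"
        using mult_left_mono[OF card_wide_insert_le[of d "twin (i, c)" \<rho>, THEN of_nat_mono], of "\<alpha> ^ Suc j"]
          less.prems \<alpha> by simp
      ultimately have P1: "sos_refutes (insert (twin (i, c)) \<rho>) (leaf_sq_deg d + j + 1) (d + k + j + 1)"
        using less.hyps by simp
      have "sos_refutes \<rho> (leaf_sq_deg d + j + 1) (d + k + j + 1)"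
        by (rule sos_refutes_glue[OF refl l(1,2) P0 P1]) (use leaf_sq_deg(2)[of d] in simp_all)
      then show ?thesis by simp
    qed
  qed
qed

end

lemma sos_degree_le:
  assumes "\<And>r. r \<in> set rs \<Longrightarrow> pdeg (r * r) \<le> D"
    and "\<And>j. j < length Q \<Longrightarrow> pdeg (ts ! j * Q ! j) \<le> D"
    and "\<And>i. i < n \<Longrightarrow> pdeg (us i * bool_axiom i) \<le> D \<and> pdeg (vs i * twin_axiom i) \<le> D"
  shows "sos_degree n Q rs ts us vs \<le> D"
  unfolding sos_degree_def
  using assms by (intro Max.boundedI) (auto simp: bool_axiom_def twin_axiom_def finite_image_set)

context twin_constraints
begin

lemma sos_refutation_if_identity_on_cube:
  assumes "length ts = length Q"
    and square: "\<And>r. r \<in> set rs \<Longrightarrow> pdeg (r * r) \<le> D \<and> pvars r \<subseteq> twin_vars n"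
    and product: "\<And>j. j < length Q \<Longrightarrow> pdeg (ts ! j * Q ! j) \<le> D \<and> pvars (ts ! j) \<subseteq> twin_vars n"
    and "\<And>b. sos_eval b rs ts = - 1"
  shows "\<exists>us vs. sos_refutation n Q rs ts us vs \<and> sos_degree n Q rs ts us vs \<le> D"
proof -
  define A where "A = (\<Sum>r\<leftarrow>rs. r * r)"
  define B where "B = (\<Sum>j<length Q. ts ! j * Q ! j)"
  have "in_bool_ideal n D (- 1 - A - B)"
  proof (rule in_bool_ideal_complete)
    show "pvars (- 1 - A - B) \<subseteq> twin_vars n"
      unfolding A_def B_def
      by (intro pvars_diff_subset pvars_sum_list_subset pvars_sum_subset pvars_mult_subset)
        (simp_all add: square product constraint_nth)
    show "pdeg (- 1 - A - B) \<le> D"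
      unfolding A_def B_def
      by (intro pdeg_diff_le pdeg_sum_list_le pdeg_sum_le) (simp_all add: square product)
    show "poly_eval (bool_point \<beta>) (- 1 - A - B) = 0" for \<beta>
      using assms(4)[of \<beta>] by (simp add: sos_eval_def A_def B_def power2_eq_square)
  qed
  then obtain u w where uw: "- 1 - A - B = (\<Sum>i<n. u i * bool_axiom i + w i * twin_axiom i)"
    "\<And>i. i < n \<Longrightarrow> pdeg (u i * bool_axiom i) \<le> D \<and> pdeg (w i * twin_axiom i) \<le> D \<and>
      pvars (u i) \<subseteq> twin_vars n \<and> pvars (w i) \<subseteq> twin_vars n"
    by (elim in_bool_idealE) blast
  have "sos_refutation n Q rs ts u w"
    unfolding sos_refutation_def
  proof (intro conjI)
    have "- 1 = A + B + (\<Sum>i<n. u i * bool_axiom i + w i * twin_axiom i)"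
      unfolding uw(1)[symmetric] by simp
    then show "- 1 = (\<Sum>r\<leftarrow>rs. r * r) + (\<Sum>j<length Q. ts ! j * Q ! j)
        + (\<Sum>i<n. u i * (Var (i, True) * Var (i, True) - Var (i, True))
                 + w i * (Var (i, True) + Var (i, False) - 1))"
      unfolding A_def B_def bool_axiom_def twin_axiom_def .
    show "\<forall>t\<in>set ts. pvars t \<subseteq> twin_vars n"
      using product assms(1) by (metis in_set_conv_nth)
  qed (use assms(1) square uw(2) in auto)
  moreover have "sos_degree n Q rs ts u w \<le> D"
    by (rule sos_degree_le) (use square product uw(2) in blast)+
  ultimately show ?thesis by blast
qed

theorem sos_refutation_if_sos_refutes:
  assumes "sos_refutes {} e c" "k \<le> c"
  shows "\<exists>rs ts us vs. sos_refutation n Q rs ts us vs \<and> sos_degree n Q rs ts us vs \<le> max (2 * e) c"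
proof -
  obtain rs ts where 1: "length ts = length Q"
    "\<And>r. r \<in> set rs \<Longrightarrow> pdeg r \<le> e \<and> pvars r \<subseteq> twin_vars n"
    "\<And>t. t \<in> set ts \<Longrightarrow> pdeg t \<le> c - k \<and> pvars t \<subseteq> twin_vars n"
    "\<And>b. b \<in> subcube {} \<Longrightarrow> - 1 = sos_eval b rs ts"
    using assms(1) unfolding sos_refutes_def by (elim sos_repE) blast
  have "pdeg (r * r) \<le> max (2 * e) c" if "r \<in> set rs" for r
    using pdeg_mult_le[of r e r e] 1(2)[OF that] by simp
  moreover have "pdeg (ts ! j * Q ! j) \<le> max (2 * e) c" if "j < length Q" for j
    using pdeg_mult_le[of "ts ! j" "c - k" "Q ! j" k] 1(1) 1(3)[of "ts ! j"] constraint_nth[OF that]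
      assms(2) that
    by simp
  moreover have "sos_eval b rs ts = - 1" for b
    using 1(4) by (simp add: subcube_def)
  ultimately show ?thesis
    using 1 by (metis nth_mem sos_refutation_if_identity_on_cube)
qed

end

section \<open>The degree bound\<close>

lemma one_minus_power_mult_less_one:
  fixes \<alpha> s w :: real
  assumes "0 < \<alpha>" "\<alpha> \<le> 1" "0 < s" "0 \<le> w" "w \<le> s"
  shows "(1 - \<alpha>) ^ (nat \<lfloor>ln s / \<alpha>\<rfloor> + 1) * w < 1"
proof -
  define T where "T = nat \<lfloor>ln s / \<alpha>\<rfloor> + 1"
  have "ln s < real T * \<alpha>"
  proof -
    have "ln s / \<alpha> < real T" unfolding T_def by linarith
    then show ?thesis using assms(1) by (simp add: field_simps)
  qed
  have "(1 - \<alpha>) ^ T \<le> exp (- \<alpha>) ^ T"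
    by (rule power_mono) (use assms(1,2) exp_ge_add_one_self[of "- \<alpha>"] in auto)
  also have "\<dots> = exp (real T * (- \<alpha>))"
    by (rule exp_of_nat_mult[symmetric])
  also have "\<dots> < exp (- ln s)"
    using \<open>ln s < real T * \<alpha>\<close> by simp
  also have "\<dots> = 1 / s"
    using assms(3) by (simp add: exp_minus inverse_eq_divide)
  finally have decay: "(1 - \<alpha>) ^ T < 1 / s" .
  have "(1 - \<alpha>) ^ T * w \<le> (1 - \<alpha>) ^ T * s"
    using assms(2,5) by (intro mult_left_mono) simp_all
  also have "\<dots> < 1 / s * s"
    by (rule mult_strict_right_mono[OF decay assms(3)])
  finally show ?thesis
    using assms(3) by (simp add: T_def)
qed

lemma degree_budget:
  fixes X L :: real and n d k T :: nat
  assumes X: "X > 0" "X\<^sup>2 = 2 * (real n + 1) * L" and "L \<ge> 0"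
    and d: "X \<le> real d" "real d \<le> X + 1" and "n > 0"
    and T: "real T \<le> L / (real d / real (2 * n)) + 1"
  shows "2 * real d + k + 2 * real T \<le> 4 * X + k + 4"
proof -
  have "L / (real d / real (2 * n)) = 2 * real n * L / real d"
    using X d by (simp add: field_simps)
  also have "\<dots> \<le> 2 * real n * L / X"
    using X d \<open>L \<ge> 0\<close> by (intro divide_left_mono) auto
  also have "\<dots> \<le> 2 * (real n + 1) * L / X"
    using X \<open>L \<ge> 0\<close> by (intro divide_right_mono) (auto simp: mult_right_mono)
  also have "\<dots> = X"
    using X by (simp add: power2_eq_square field_simps)
  finally show ?thesis using T d by linarith
qed

context twin_refutation
begin

lemma no_wide_if_few_sig_monoms:
  assumes "card sig_monoms \<le> 1"
  shows "wide 0 {} = {}"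
proof (rule ccontr)
  assume "wide 0 {} \<noteq> {}"
  then obtain m where m: "m \<in> sig_monoms" "0 < width {} m"
    by (auto simp: wide_def)
  then have sig: "sig_monoms = {m}"
    using assms finite_sig_monoms by (metis card_0_eq card_1_singletonE empty_iff le_eq_less_or_eq
        less_one singletonD)
  have "keys m \<noteq> {}"
    using m(2) by (auto simp: width_def)
  then obtain v where v: "v \<in> keys m"
    by blast
  define b where "b = (\<lambda>_::nat. \<not> snd v)"
  have "monom_eval (bool_point b) m = 0"
    using v by (simp add: monom_eval_bool_point prod.remove b_def bool_point_def)
  moreover have "keys p \<subseteq> {m}" if "p \<in> set rs0 \<union> set ts0" for p
    using that sig by (auto simp: significant_monomials_def)
  ultimately have zero: "poly_eval (bool_point b) p = 0" if "p \<in> set rs0 \<union> set ts0" for p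
    using that poly_eval_superset[of "{m}" p] by simp
  have "(\<Sum>r\<leftarrow>rs0. poly_eval (bool_point b) r ^ 2) = (\<Sum>r\<leftarrow>rs0. 0)"
    by (intro arg_cong[where f = sum_list] map_cong) (simp_all add: zero)
  moreover have "(\<Sum>j<length Q. poly_eval (bool_point b) (ts0 ! j) * poly_eval (bool_point b) (Q ! j)) = 0"
    using length_ts0 by (intro sum.neutral) (simp add: zero)
  ultimately have "sos_eval b rs0 ts0 = 0"
    by (simp add: sos_eval_def)
  then show False
    using sos_eval_refutation[of b] by simp
qed

lemma no_wide_if_large: "2 * n < d \<Longrightarrow> wide d \<rho> = {}"
proof -
  assume "2 * n < d"
  have "width \<rho> m \<le> 2 * n" if "m \<in> sig_monoms" for m
  proof -
    have "width \<rho> m \<le> card (keys m)"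
      unfolding width_def by (rule card_mono) auto
    also have "\<dots> \<le> card (twin_vars n)"
      by (rule card_mono[OF finite_twin_vars keys_sig_monoms[OF that]])
    finally show ?thesis by (simp add: card_twin_vars)
  qed
  then show ?thesis
    using \<open>2 * n < d\<close> by (force simp: wide_def)
qed

lemma sos_refutes_by_branching_from_top:
  assumes "1 \<le> d" "d \<le> 2 * n" "2 \<le> card sig_monoms"
  defines "T \<equiv> nat \<lfloor>ln (real (card sig_monoms)) / (real d / real (2 * n))\<rfloor> + 1"
  shows "sos_refutes {} (leaf_sq_deg d + T) (d + k + T)"
proof -
  have "0 < real d / real (2 * n)" "real d / real (2 * n) \<le> 1"
    using assms(1,2) by (simp_all add: field_simps)
  moreover have "card (wide d {}) \<le> card sig_monoms"
    by (rule card_mono[OF finite_sig_monoms]) (auto simp: wide_def)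
  ultimately have "(1 - real d / real (2 * n)) ^ T * card (wide d {}) < 1"
    unfolding T_def using assms(3) by (intro one_minus_power_mult_less_one) simp_all
  then show ?thesis
    by (rule sos_refutes_by_branching[OF assms(2)])
qed

text \<open>The branching depth is \<open>T \<approx> (2n / d) ln s\<close> and the leaves have degree about \<open>2 d + k\<close>;
  \<open>d = \<lceil>\<surd>(2 (n + 1) ln s)\<rceil>\<close> balances the two.\<close>

lemma sos_refutes_degree_bound:
  defines "X \<equiv> sqrt (2 * (real n + 1) * ln (real (card sig_monoms)))"
  shows "\<exists>e c. sos_refutes {} e c \<and> k \<le> c \<and> real (max (2 * e) c) \<le> 4 * X + real k + 4"
proof (cases "card sig_monoms \<le> 1")
  case True
  then have "sos_refutes {} 0 k"
    using sos_refutes_if_no_wide[OF no_wide_if_few_sig_monoms] by simp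
  moreover have "X = 0"
    using True by (auto simp: X_def le_Suc_eq)
  ultimately show ?thesis by (intro exI[of _ 0] exI[of _ k]) simp
next
  case False
  define L where "L = ln (real (card sig_monoms))"
  define d where "d = nat \<lceil>X\<rceil>"
  have L: "L > 0" using False by (simp add: L_def)
  have X: "X > 0" "X\<^sup>2 = 2 * (real n + 1) * L"
    using L by (simp_all add: X_def L_def)
  have d: "X \<le> real d" "real d \<le> X + 1" "1 \<le> d"
    using X(1) by (simp_all add: d_def) linarith
  show ?thesis
  proof (cases "d \<le> 2 * n")
    case False
    then have "sos_refutes {} d (d + k)"
      by (intro sos_refutes_if_no_wide no_wide_if_large) simp
    moreover have "real (max (2 * d) (d + k)) \<le> 4 * X + real k + 4"
      using d X(1) by simp
    moreover have "k \<le> d + k" by simp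
    ultimately show ?thesis by blast
  next
    case True
    define T where "T = nat \<lfloor>L / (real d / real (2 * n))\<rfloor> + 1"
    have "sos_refutes {} (leaf_sq_deg d + T) (d + k + T)"
      using sos_refutes_by_branching_from_top[OF d(3) True] False by (simp add: T_def L_def)
    moreover have "2 * real d + k + 2 * real T \<le> 4 * X + k + 4"
      using True d(3) L by (intro degree_budget[OF X _ d(1,2)]) (simp_all add: T_def)
    then have "real (max (2 * (leaf_sq_deg d + T)) (d + k + T)) \<le> 4 * X + real k + 4"
      using d(3) by (simp add: leaf_sq_deg_def)
    moreover have "k \<le> d + k + T" by simp
    ultimately show ?thesis by blast
  qed
qed

end

theorem theorem1:
  fixes n k s :: nat and Q :: "rpoly list"
  assumes "\<forall>q\<in>set Q. pdeg q \<le> k \<and> pvars q \<subseteq> twin_vars n"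
    and "\<exists>rs ts us vs. sos_refutation n Q rs ts us vs \<and> card (significant_monomials rs ts) = s"
  shows "\<exists>rs ts us vs. sos_refutation n Q rs ts us vs \<and>
           real (sos_degree n Q rs ts us vs) \<le> 4 * sqrt (2 * (real n + 1) * ln (real s)) + real k + 4"
proof -
  obtain rs0 ts0 us0 vs0 where refutation: "sos_refutation n Q rs0 ts0 us0 vs0"
    and s: "card (significant_monomials rs0 ts0) = s"
    using assms(2) by blast
  interpret twin_refutation n k Q rs0 ts0 us0 vs0
    using assms(1) refutation by unfold_locales
  obtain e c where ec: "sos_refutes {} e c" "k \<le> c"
    and bound: "real (max (2 * e) c) \<le> 4 * sqrt (2 * (real n + 1) * ln (real s)) + real k + 4"
    using sos_refutes_degree_bound s by blast
  obtain rs ts us vs where "sos_refutation n Q rs ts us vs" "sos_degree n Q rs ts us vs \<le> max (2 * e) c"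
    using sos_refutation_if_sos_refutes[OF ec] by blast
  with bound show ?thesis
    by (meson of_nat_le_iff order_trans)
qed

end
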